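(* Let $P$ be the operator below and let $Lf=\frac{P(f)-f}{q^0}$ (the linearized relativistic BGK operator). Then: 1. $L$ is self-adjoint with respect to the scalar product $\langle f,g\rangle=\int_{\mathbb{R}^3}f(\mathbf q)g(\mathbf q)\,d\mathbf q$; 2. $\mathrm{Ker}(L)=N:=\mathrm{span}\{\sqrt{J^0},q^\mu\sqrt{J^0}\ (\mu=0,1,2,3)\}$; 3. $L$ is non-positive; in fact $\langle Lf,f\rangle=-\langle(I-P)f,(I-P)f\rangle_{q^0}\le0$, where $\langle f,g\rangle_{q^0}=\int_{\mathbb{R}^3}\frac{fg}{q^0}\,d\mathbf q$; 4. $L=-\frac{1}{q^0}\,\mathrm{Id}+K$, where $K=\frac{P}{q^0}$ is a compact operator on $L^2(\mathbb{R}^3)$.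
   Context: Dimensionless setting: $q^0=\sqrt{1+|\mathbf q|^2}$, $q^\mu=(q^0,\mathbf q)$, $K_j(\beta)=\int_0^\infty\cosh(jr)e^{-\beta\cosh r}dr$, $M(\beta)=\int_{\mathbb{R}^3}e^{-\beta\sqrt{1+|\mathbf p|^2}}d\mathbf p$, $\Psi(\beta)=\frac3\beta+\frac{K_1(\beta)}{K_2(\beta)}$. Fix $\beta_0>0$, $J^0(\mathbf q)=e^{-\beta_0q^0}/M(\beta_0)$, $\alpha_0=K_1(\beta_0)/K_2(\beta_0)$, $\kappa_0=\frac{3\alpha_0}{\beta_0}+\alpha_0^2-1$. For $f\in L^2(\mathbb{R}^3)$ and $h=f\sqrt{J^0}$ set $n_h\sqrt{1+|\mathbf u_h|^2}:=\int h\,d\mathbf q$, $n_h\alpha_h:=\int h\,\frac{d\mathbf q}{q^0}$, $n_h\mathbf u_h:=\int\mathbf q\,h\,\frac{d\mathbf q}{q^0}$, and $$P(f)=\Big[\frac{\alpha_0q^0-1}{\kappa_0}n_h\sqrt{1+|\mathbf u_h|^2}+\frac{\Psi(\beta_0)-q^0}{\kappa_0}n_h\alpha_h+\beta_0 n_h\mathbf u_h\cdot\mathbf q\Big]\sqrt{J^0}.$$ *)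

theory Defs
  imports "HOL-Analysis.Analysis"
begin

type_synonym mom = "real ^ 3"

definition q0 :: "mom \<Rightarrow> real" where
  "q0 q = sqrt (1 + (norm q)\<^sup>2)"

definition besselK :: "real \<Rightarrow> real \<Rightarrow> real" where
  "besselK j \<beta> = (LBINT r:{0..}. cosh (j * r) * exp (- \<beta> * cosh r))"

definition Mnorm :: "real \<Rightarrow> real" where
  "Mnorm \<beta> = (LINT p|lborel. exp (- \<beta> * q0 p))"

definition Psi :: "real \<Rightarrow> real" where
  "Psi \<beta> = 3 / \<beta> + besselK 1 \<beta> / besselK 2 \<beta>"

definition J0 :: "real \<Rightarrow> mom \<Rightarrow> real" where
  "J0 \<beta>0 q = exp (- \<beta>0 * q0 q) / Mnorm \<beta>0"

definition alpha0 :: "real \<Rightarrow> real" where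
  "alpha0 \<beta>0 = besselK 1 \<beta>0 / besselK 2 \<beta>0"

definition kappa0 :: "real \<Rightarrow> real" where
  "kappa0 \<beta>0 = 3 * alpha0 \<beta>0 / \<beta>0 + (alpha0 \<beta>0)\<^sup>2 - 1"

text \<open>Square integrable real functions on R^3 (representatives of L^2(R^3)).\<close>
definition L2 :: "(mom \<Rightarrow> real) set" where
  "L2 = {f. f \<in> borel_measurable lborel \<and> integrable lborel (\<lambda>q. (f q)\<^sup>2)}"

definition inner_L2 :: "(mom \<Rightarrow> real) \<Rightarrow> (mom \<Rightarrow> real) \<Rightarrow> real" where
  "inner_L2 f g = (LINT q|lborel. f q * g q)"

definition inner_q0 :: "(mom \<Rightarrow> real) \<Rightarrow> (mom \<Rightarrow> real) \<Rightarrow> real" where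
  "inner_q0 f g = (LINT q|lborel. f q * g q / q0 q)"

text \<open>Moments of h = f sqrt(J0):
  n_h sqrt(1+|u_h|^2) = int h, n_h alpha_h = int h/q0, n_h u_h = int q h/q0.\<close>
definition nh_energy :: "real \<Rightarrow> (mom \<Rightarrow> real) \<Rightarrow> real" where
  "nh_energy \<beta>0 f = (LINT q|lborel. f q * sqrt (J0 \<beta>0 q))"

definition nh_alpha :: "real \<Rightarrow> (mom \<Rightarrow> real) \<Rightarrow> real" where
  "nh_alpha \<beta>0 f = (LINT q|lborel. f q * sqrt (J0 \<beta>0 q) / q0 q)"

definition nh_u :: "real \<Rightarrow> (mom \<Rightarrow> real) \<Rightarrow> mom" where
  "nh_u \<beta>0 f = (\<chi> i. LINT q|lborel. (q $ i) * f q * sqrt (J0 \<beta>0 q) / q0 q)"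

definition Pop :: "real \<Rightarrow> (mom \<Rightarrow> real) \<Rightarrow> mom \<Rightarrow> real" where
  "Pop \<beta>0 f q =
     ((alpha0 \<beta>0 * q0 q - 1) / kappa0 \<beta>0 * nh_energy \<beta>0 f
      + (Psi \<beta>0 - q0 q) / kappa0 \<beta>0 * nh_alpha \<beta>0 f
      + \<beta>0 * (nh_u \<beta>0 f \<bullet> q)) * sqrt (J0 \<beta>0 q)"

definition Lop :: "real \<Rightarrow> (mom \<Rightarrow> real) \<Rightarrow> mom \<Rightarrow> real" where
  "Lop \<beta>0 f q = (Pop \<beta>0 f q - f q) / q0 q"

definition Kop :: "real \<Rightarrow> (mom \<Rightarrow> real) \<Rightarrow> mom \<Rightarrow> real" where
  "Kop \<beta>0 f q = Pop \<beta>0 f q / q0 q"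

definition compact_op_L2 :: "((mom \<Rightarrow> real) \<Rightarrow> mom \<Rightarrow> real) \<Rightarrow> bool" where
  "compact_op_L2 T \<longleftrightarrow>
     (\<forall>f\<in>L2. T f \<in> L2) \<and>
     (\<forall>fs :: nat \<Rightarrow> mom \<Rightarrow> real. \<forall>C. (\<forall>n. fs n \<in> L2 \<and> (LINT q|lborel. (fs n q)\<^sup>2) \<le> C) \<longrightarrow>
        (\<exists>r g. strict_mono r \<and> g \<in> L2 \<and>
           (\<lambda>n. LINT q|lborel. (T (fs (r n)) q - g q)\<^sup>2) \<longlonglongrightarrow> 0))"

end

theory Submission
  imports Defs
begin

text \<open>
  P f = (a + b q0 + c.q) sqrt J0, where (a, b, c) depends linearly on the three moments
  int h/q0, int h and int q h/q0 of h = f sqrt J0. The moments of the Juettner distribution,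
  int J0 = 1, int J0/q0 = alpha0, int q0 J0 = Psi, int q_i q_j J0/q0 = delta_ij/beta0 and the
  vanishing odd moments, show that P preserves these three moments and fixes N, and that
  <P f, g>_q0 is a symmetric bilinear form in the moments of f and g. Hence P is the
  <.,.>_q0-orthogonal projection onto N, which gives self-adjointness of L,
  <L f, f> = - |f - P f|^2_q0, and Ker L = N. The operator K = P/q0 factors through the
  moment map into R^5, which is bounded by Cauchy-Schwarz, so K is compact.

  The moment integrals are reduced by the layer-cake formula in the variable |q| = sinh t to
  integrals of hyperbolic polynomials against exp (-beta cosh t), which integration by parts
  turns into K_1 and K_2. Positivity of kappa0 = alpha0 Psi - 1 is the Cauchy-Schwarz inequality
  between int exp(-beta q0)/q0 and int q0 exp(-beta q0).
\<close>

section \<open>Integrals against exp(-beta cosh t) on the half-line\<close>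

abbreviation half_line_integral :: "(real \<Rightarrow> real) \<Rightarrow> real" where
  "half_line_integral g \<equiv> set_lebesgue_integral lborel {0..} g"

definition cosh_weight :: "real \<Rightarrow> real \<Rightarrow> real" where
  "cosh_weight \<beta> t = exp (- \<beta> * cosh t)"

lemma pow6_le_exp:
  fixes x \<beta> :: real assumes "\<beta> > 0" "x \<ge> 0"
  shows "x ^ 6 \<le> (6/\<beta>)^6 * exp (\<beta> * x)"
proof -
  have "\<beta> * x / 6 \<le> exp (\<beta> * x / 6)" using exp_ge_add_one_self[of "\<beta> * x / 6"] by linarith
  hence "(\<beta> * x / 6)^6 \<le> exp (\<beta> * x / 6)^6"
    by (intro power_mono) (use assms in auto)
  also have "exp (\<beta> * x / 6)^6 = exp (\<beta> * x)"
    by (subst exp_of_nat_mult[symmetric]) simp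
  finally have "(\<beta> * x / 6)^6 \<le> exp (\<beta> * x)" .
  hence "(\<beta>/6)^6 * x^6 \<le> exp (\<beta> * x)" by (simp add: power_mult_distrib field_simps)
  hence "x^6 \<le> exp (\<beta> * x) / (\<beta>/6)^6" using assms by (simp add: field_simps)
  thus ?thesis by (simp add: field_simps power_divide)
qed

lemma cosh5_weight_le_exp:
  assumes "\<beta> > 0"
  shows "cosh t ^ 5 * cosh_weight \<beta> t \<le> 2 * (6/\<beta>)^6 * exp (- \<bar>t\<bar>)"
proof -
  have c1: "cosh t \<ge> 1" by (rule cosh_real_ge_1)
  have et: "exp \<bar>t\<bar> \<le> 2 * cosh t"
    by (cases "t \<ge> 0") (auto simp: cosh_def)
  have "cosh t ^ 5 * cosh_weight \<beta> t * exp \<bar>t\<bar> \<le> cosh t ^ 5 * cosh_weight \<beta> t * (2 * cosh t)"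
    by (intro mult_left_mono et) (auto simp: cosh_weight_def)
  also have "\<dots> = 2 * (cosh t ^ 6 * exp (- \<beta> * cosh t))" by (simp add: cosh_weight_def algebra_simps eval_nat_numeral)
  also have "\<dots> \<le> 2 * ((6/\<beta>)^6 * exp (\<beta> * cosh t) * exp (- \<beta> * cosh t))"
    using pow6_le_exp[OF assms, of "cosh t"] c1 by (intro mult_left_mono mult_right_mono) auto
  also have "\<dots> = 2 * (6/\<beta>)^6" by (simp add: exp_minus field_simps)
  finally have "cosh t ^ 5 * cosh_weight \<beta> t * exp \<bar>t\<bar> \<le> 2 * (6/\<beta>)^6" .
  hence "cosh t ^ 5 * cosh_weight \<beta> t * exp \<bar>t\<bar> * exp (- \<bar>t\<bar>) \<le> 2 * (6/\<beta>)^6 * exp (- \<bar>t\<bar>)"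
    by (intro mult_right_mono) auto
  thus ?thesis by (simp add: exp_minus_inverse mult.assoc flip: exp_add)
qed

lemma integrable_exp_minus_abs: "integrable lborel (\<lambda>t::real. exp (- \<bar>t\<bar>) * indicator {0..} t)"
proof (rule integrableI_nonneg)
  have "(\<integral>\<^sup>+t. ennreal (exp (- t)) * indicator {0..} t \<partial>lborel) = ennreal (0 - (- exp (- 0)))"
  proof (rule nn_integral_FTC_atLeast[where F="\<lambda>x. - exp (- x)" and T=0 and a=0 and f="\<lambda>x. exp(-x)"])
    have "((\<lambda>x::real. exp (- x)) \<longlongrightarrow> 0) at_top"
      by (rule filterlim_compose[OF exp_at_bot filterlim_uminus_at_bot_at_top])
    from tendsto_minus[OF this] show "((\<lambda>x::real. - exp (- x)) \<longlongrightarrow> 0) at_top" by simp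
  qed (auto intro!: derivative_eq_intros)
  hence "(\<integral>\<^sup>+t. ennreal (exp (- \<bar>t\<bar>) * indicator {0..} t) \<partial>lborel) = 1"
    by (subst nn_integral_cong[where v = "\<lambda>t. ennreal (exp (- t)) * indicator {0..} t"]) 
       (auto split: split_indicator)
  thus "(\<integral>\<^sup>+t. ennreal (exp (- \<bar>t\<bar>) * indicator {0..} t) \<partial>lborel) < \<infinity>" by simp
qed auto

lemma set_integrable_cosh_weight:
  assumes b: "\<beta> > 0" and g: "continuous_on UNIV g"
    and bd: "\<And>t. t \<ge> 0 \<Longrightarrow> \<bar>g t\<bar> \<le> c * cosh t ^ 5"
  shows "set_integrable lborel {0..} (\<lambda>t. g t * cosh_weight \<beta> t)"
  unfolding set_integrable_def
proof (rule Bochner_Integration.integrable_bound[of _ "\<lambda>t. (c * (2 * (6/\<beta>)^6)) * (exp (- \<bar>t\<bar>) * indicator {0..} t)"])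
  show "integrable lborel (\<lambda>t. (c * (2 * (6/\<beta>)^6)) * (exp (- \<bar>t\<bar>) * indicator {0..} t))"
    using integrable_exp_minus_abs by (rule integrable_mult_right)
  have "continuous_on UNIV (\<lambda>t. g t * cosh_weight \<beta> t)" unfolding cosh_weight_def
    by (intro continuous_intros g)
  hence "(\<lambda>t. g t * cosh_weight \<beta> t) \<in> borel_measurable lborel"
    by (simp add: borel_measurable_continuous_onI)
  thus "(\<lambda>t. indicat_real {0..} t *\<^sub>R (g t * cosh_weight \<beta> t)) \<in> borel_measurable lborel" by measurable
  have c0: "c \<ge> 0" using bd[of 0] by simp
  show "AE t in lborel. norm (indicat_real {0..} t *\<^sub>R (g t * cosh_weight \<beta> t))
     \<le> norm (c * (2 * (6 / \<beta>) ^ 6) * (exp (- \<bar>t\<bar>) * indicat_real {0..} t))"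
  proof (rule AE_I2)
    fix t
    show "norm (indicat_real {0..} t *\<^sub>R (g t * cosh_weight \<beta> t))
     \<le> norm (c * (2 * (6 / \<beta>) ^ 6) * (exp (- \<bar>t\<bar>) * indicat_real {0..} t))"
    proof (cases "t \<ge> 0")
      case True
      have wpos: "cosh_weight \<beta> t > 0" by (simp add: cosh_weight_def)
      have "\<bar>g t * cosh_weight \<beta> t\<bar> = \<bar>g t\<bar> * cosh_weight \<beta> t" using wpos by (simp add: abs_mult)
      also have "\<dots> \<le> c * cosh t ^ 5 * cosh_weight \<beta> t" using bd[OF True] wpos by (intro mult_right_mono) auto
      also have "\<dots> \<le> c * (2 * (6/\<beta>)^6 * exp (- \<bar>t\<bar>))"
        unfolding mult.assoc using cosh5_weight_le_exp[OF b, of t] c0 by (intro mult_left_mono) auto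
      finally show ?thesis using True c0 b by (simp add: abs_mult)
    qed simp
  qed
qed

lemma set_integral_atLeast_FTC:
  fixes f F :: "real \<Rightarrow> real"
  assumes int: "set_integrable lborel {a..} f"
    and der: "\<And>x. x \<ge> a \<Longrightarrow> DERIV F x :> f x"
    and cont: "\<And>x. x \<ge> a \<Longrightarrow> isCont f x"
    and lim: "(F \<longlongrightarrow> L) at_top"
  shows "set_lebesgue_integral lborel {a..} f = L - F a"
proof -
  have 1: "((\<lambda>b. set_lebesgue_integral lborel {a..b} f) \<longlongrightarrow> set_lebesgue_integral lborel {a..} f) at_top"
    by (rule tendsto_set_lebesgue_integral_at_top[OF _ int]) auto
  have "eventually (\<lambda>b. set_lebesgue_integral lborel {a..b} f = F b - F a) at_top"
    unfolding eventually_at_top_linorder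
  proof (intro exI allI impI)
    fix b assume "b \<ge> a"
    thus "set_lebesgue_integral lborel {a..b} f = F b - F a"
      unfolding set_lebesgue_integral_def
      using integral_FTC_Icc_real[of a b F f] der cont by (simp add: mult.commute)
  qed
  hence 2: "((\<lambda>b. set_lebesgue_integral lborel {a..b} f) \<longlongrightarrow> L - F a) at_top"
    by (intro Lim_transform_eventually[OF tendsto_diff[OF lim tendsto_const]]) (simp add: eq_commute)
  show ?thesis using tendsto_unique[OF _ 1 2] by simp
qed

lemma abs_sinh_le_cosh: "\<bar>sinh (t::real)\<bar> \<le> cosh t"
  using sinh_le_cosh_real[of t] sinh_le_cosh_real[of "-t"] by (auto simp: abs_if)

lemma abs_sinh_pow_cosh_pow_le:
  "\<bar>sinh (t::real) ^ k * cosh t ^ m\<bar> \<le> cosh t ^ (k + m)"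
proof -
  have "\<bar>sinh t ^ k * cosh t ^ m\<bar> = \<bar>sinh t\<bar> ^ k * cosh t ^ m" by (simp add: abs_mult power_abs)
  also have "\<dots> \<le> cosh t ^ k * cosh t ^ m"
    by (intro mult_right_mono power_mono abs_sinh_le_cosh) auto
  also have "\<dots> = cosh t ^ (k + m)" by (simp add: power_add)
  finally show ?thesis .
qed

lemma abs_sinh_pow_cosh_pow_le_cosh5:
  assumes "k + m \<le> 5"
  shows "\<bar>sinh (t::real) ^ k * cosh t ^ m\<bar> \<le> cosh t ^ 5"
  using abs_sinh_pow_cosh_pow_le[of t k m] power_increasing[OF assms, of "cosh t"] cosh_real_ge_1[of t]
  by linarith

lemma set_integrable_sinh_cosh_weight:
  assumes b: "\<beta> > 0" and km: "k + m \<le> 5"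
  shows "set_integrable lborel {0..} (\<lambda>s. sinh s ^ k * cosh s ^ m * cosh_weight \<beta> s)"
proof (rule set_integrable_cosh_weight[OF b, where c=1])
  show "continuous_on UNIV (\<lambda>s::real. sinh s ^ k * cosh s ^ m)" by (intro continuous_intros)
  fix t :: real
  show "\<bar>sinh t ^ k * cosh t ^ m\<bar> \<le> 1 * cosh t ^ 5" using abs_sinh_pow_cosh_pow_le_cosh5[OF km, of t] by simp
qed

lemma tendsto_cosh_weight_zero:
  assumes b: "\<beta> > 0" and bd: "\<And>t. t \<ge> 0 \<Longrightarrow> \<bar>s t\<bar> \<le> c * cosh t ^ 5"
  shows "((\<lambda>t. s t * cosh_weight \<beta> t) \<longlongrightarrow> 0) at_top"
proof (rule Lim_null_comparison)
  have c0: "c \<ge> 0" using bd[of 0] by simp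
  show "\<forall>\<^sub>F t in at_top. norm (s t * cosh_weight \<beta> t) \<le> c * (2 * (6/\<beta>)^6) * exp (- t)"
    unfolding eventually_at_top_linorder
  proof (intro exI allI impI)
    fix t :: real assume t: "t \<ge> 0"
    have wpos: "cosh_weight \<beta> t > 0" by (simp add: cosh_weight_def)
    have "norm (s t * cosh_weight \<beta> t) = \<bar>s t\<bar> * cosh_weight \<beta> t" using wpos by (simp add: abs_mult)
    also have "\<dots> \<le> c * cosh t ^ 5 * cosh_weight \<beta> t" using bd[OF t] wpos by (intro mult_right_mono) auto
    also have "\<dots> \<le> c * (2 * (6/\<beta>)^6 * exp (- \<bar>t\<bar>))"
      unfolding mult.assoc using cosh5_weight_le_exp[OF b, of t] c0 by (intro mult_left_mono) auto
    finally show "norm (s t * cosh_weight \<beta> t) \<le> c * (2 * (6/\<beta>)^6) * exp (- t)" using t by simp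
  qed
  have "((\<lambda>x::real. exp (- x)) \<longlongrightarrow> 0) at_top"
    by (rule filterlim_compose[OF exp_at_bot filterlim_uminus_at_bot_at_top])
  from tendsto_mult_right[OF this, of "c * (2 * (6/\<beta>)^6)"]
  show "((\<lambda>t. c * (2 * (6/\<beta>)^6) * exp (- t)) \<longlongrightarrow> 0) at_top" by (simp add: mult.commute)
qed

lemma half_line_integral_by_parts:
  assumes b: "\<beta> > 0" and cp: "continuous_on UNIV p" and cr: "continuous_on UNIV r"
    and bp: "\<And>t. t \<ge> 0 \<Longrightarrow> \<bar>p t\<bar> \<le> c * cosh t ^ 5"
    and br: "\<And>t. t \<ge> 0 \<Longrightarrow> \<bar>r t\<bar> \<le> c * cosh t ^ 5"
    and bs: "\<And>t. t \<ge> 0 \<Longrightarrow> \<bar>s t\<bar> \<le> c * cosh t ^ 5"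
    and s0: "s 0 = 0"
    and der: "\<And>t. DERIV (\<lambda>t. s t * cosh_weight \<beta> t) t :> (p t - r t) * cosh_weight \<beta> t"
  shows "set_lebesgue_integral lborel {0..} (\<lambda>t. p t * cosh_weight \<beta> t)
       = set_lebesgue_integral lborel {0..} (\<lambda>t. r t * cosh_weight \<beta> t)"
proof -
  have ip: "set_integrable lborel {0..} (\<lambda>t. p t * cosh_weight \<beta> t)" by (rule set_integrable_cosh_weight[OF b cp bp])
  have ir: "set_integrable lborel {0..} (\<lambda>t. r t * cosh_weight \<beta> t)" by (rule set_integrable_cosh_weight[OF b cr br])
  have "set_integrable lborel {0..} (\<lambda>t. (p t - r t) * cosh_weight \<beta> t)"
    by (rule set_integrable_cosh_weight[of _ _ "2*c"], rule b, intro continuous_intros cp cr)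
       (use bp br in \<open>fastforce intro: order.trans[OF abs_triangle_ineq4]\<close>)
  hence "set_lebesgue_integral lborel {0..} (\<lambda>t. (p t - r t) * cosh_weight \<beta> t) = 0 - s 0 * cosh_weight \<beta> 0"
    by (rule set_integral_atLeast_FTC[OF _ der _ tendsto_cosh_weight_zero[OF b bs]]) (auto intro!: continuous_on_interior[of UNIV] continuous_intros cp cr
         simp: cosh_weight_def)
  hence "set_lebesgue_integral lborel {0..} (\<lambda>t. p t * cosh_weight \<beta> t - r t * cosh_weight \<beta> t) = 0"
    using s0 by (simp add: algebra_simps)
  thus ?thesis using set_integral_diff(2)[OF ip ir] by simp
qed

lemma besselK1_eq_half_line: "besselK 1 \<beta> = half_line_integral (\<lambda>t. cosh t * cosh_weight \<beta> t)"
  unfolding besselK_def cosh_weight_def by simp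

lemma besselK2_eq_half_line: "besselK 2 \<beta> = half_line_integral (\<lambda>t. (cosh t ^ 2 + sinh t ^ 2) * cosh_weight \<beta> t)"
  unfolding besselK_def cosh_weight_def by (simp add: cosh_double)

lemma abs_le_const_bound:
  fixes x C \<beta> k :: real
  assumes "\<bar>x\<bar> \<le> C" "\<beta> > 0" "0 \<le> k" "k \<le> 3"
  shows "\<bar>x\<bar> \<le> (1 + 3/\<beta>) * C" "\<bar>k * x / \<beta>\<bar> \<le> (1 + 3/\<beta>) * C"
proof -
  have C0: "C \<ge> 0" using assms(1) abs_ge_zero[of x] by linarith
  have "3/\<beta> * C \<ge> 0" using assms C0 by simp
  thus "\<bar>x\<bar> \<le> (1 + 3/\<beta>) * C" using assms(1) by (simp add: algebra_simps)
  have "\<bar>k * x / \<beta>\<bar> = k * \<bar>x\<bar> / \<beta>" using assms by (simp add: abs_mult)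
  also have "\<dots> \<le> 3 * C / \<beta>" using assms C0
    by (intro divide_right_mono mult_mono) auto
  also have "\<dots> \<le> (1 + 3/\<beta>) * C" using C0 by (simp add: algebra_simps)
  finally show "\<bar>k * x / \<beta>\<bar> \<le> (1 + 3/\<beta>) * C" .
qed

lemma abs_div_le_const_bound:
  fixes x C \<beta> k :: real
  assumes "\<bar>x\<bar> \<le> k * C" "\<beta> > 0" "0 \<le> k" "k \<le> 3" "C \<ge> 0"
  shows "\<bar>x / \<beta>\<bar> \<le> (1 + 3/\<beta>) * C"
proof -
  have "\<bar>x / \<beta>\<bar> = \<bar>x\<bar> / \<beta>" using assms by simp
  also have "\<dots> \<le> 3 * C / \<beta>" using assms
    by (intro divide_right_mono order.trans[OF assms(1)] mult_right_mono) auto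
  also have "\<dots> \<le> (1 + 3/\<beta>) * C" using assms by (simp add: algebra_simps)
  finally show ?thesis .
qed

lemma half_line_integral_sinh2:
  assumes b: "\<beta> > 0"
  shows "half_line_integral (\<lambda>t. sinh t ^ 2 * cosh_weight \<beta> t) = besselK 1 \<beta> / \<beta>"
proof -
  have "half_line_integral (\<lambda>t. sinh t ^ 2 * cosh_weight \<beta> t) = half_line_integral (\<lambda>t. (cosh t / \<beta>) * cosh_weight \<beta> t)"
  proof (rule half_line_integral_by_parts[OF b, where c="1 + 3/\<beta>" and s="\<lambda>t. - sinh t / \<beta>"])
    fix t :: real
    show "DERIV (\<lambda>t. - sinh t / \<beta> * cosh_weight \<beta> t) t :> (sinh t ^ 2 - cosh t / \<beta>) * cosh_weight \<beta> t"
      unfolding cosh_weight_def using b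
      by (auto intro!: derivative_eq_intros simp: field_simps power2_eq_square)
    assume t: "t \<ge> 0"
    show "\<bar>sinh t ^ 2\<bar> \<le> (1 + 3 / \<beta>) * cosh t ^ 5"
      using abs_le_const_bound(1)[OF abs_sinh_pow_cosh_pow_le_cosh5[of 2 0 t] b, of 1] by simp
    show "\<bar>cosh t / \<beta>\<bar> \<le> (1 + 3 / \<beta>) * cosh t ^ 5"
      using abs_le_const_bound(2)[OF abs_sinh_pow_cosh_pow_le_cosh5[of 0 1 t] b, of 1] by simp
    show "\<bar>- sinh t / \<beta>\<bar> \<le> (1 + 3 / \<beta>) * cosh t ^ 5"
      using abs_le_const_bound(2)[OF abs_sinh_pow_cosh_pow_le_cosh5[of 1 0 t] b, of 1] by simp
  next
    show "continuous_on UNIV (\<lambda>t::real. sinh t ^ 2)" by (intro continuous_intros)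
    show "continuous_on UNIV (\<lambda>t::real. cosh t / \<beta>)" using b by (intro continuous_intros) auto
  qed simp
  also have "\<dots> = half_line_integral (\<lambda>t. cosh t * cosh_weight \<beta> t) / \<beta>"
    by (subst set_integral_divide_zero[symmetric]) (simp add: field_simps)
  finally show ?thesis by (simp add: besselK1_eq_half_line)
qed

lemma half_line_integral_sinh2_cosh:
  assumes b: "\<beta> > 0"
  shows "half_line_integral (\<lambda>t. sinh t ^ 2 * cosh t * cosh_weight \<beta> t) = besselK 2 \<beta> / \<beta>"
proof -
  have "half_line_integral (\<lambda>t. sinh t ^ 2 * cosh t * cosh_weight \<beta> t) = half_line_integral (\<lambda>t. ((cosh t ^ 2 + sinh t ^ 2) / \<beta>) * cosh_weight \<beta> t)"
  proof (rule half_line_integral_by_parts[OF b, where c="1 + 3/\<beta>" and s="\<lambda>t. - (sinh t * cosh t) / \<beta>"])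
    fix t :: real
    show "DERIV (\<lambda>t. - (sinh t * cosh t) / \<beta> * cosh_weight \<beta> t) t :> (sinh t ^ 2 * cosh t - (cosh t ^ 2 + sinh t ^ 2) / \<beta>) * cosh_weight \<beta> t"
      unfolding cosh_weight_def using b
      by (auto intro!: derivative_eq_intros simp: field_simps power2_eq_square)
    assume t: "t \<ge> 0"
    show "\<bar>sinh t ^ 2 * cosh t\<bar> \<le> (1 + 3 / \<beta>) * cosh t ^ 5"
      using abs_le_const_bound(1)[OF abs_sinh_pow_cosh_pow_le_cosh5[of 2 1 t] b, of 1] by simp
    have "\<bar>cosh t ^ 2 + sinh t ^ 2\<bar> \<le> 2 * cosh t ^ 5"
      using abs_sinh_pow_cosh_pow_le_cosh5[of 0 2 t] abs_sinh_pow_cosh_pow_le_cosh5[of 2 0 t] by (simp add: abs_of_nonneg)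
    thus "\<bar>(cosh t ^ 2 + sinh t ^ 2) / \<beta>\<bar> \<le> (1 + 3 / \<beta>) * cosh t ^ 5"
      by (rule abs_div_le_const_bound[OF _ b]) auto
    show "\<bar>- (sinh t * cosh t) / \<beta>\<bar> \<le> (1 + 3 / \<beta>) * cosh t ^ 5"
      using abs_le_const_bound(2)[OF abs_sinh_pow_cosh_pow_le_cosh5[of 1 1 t] b, of 1] by simp
  next
    show "continuous_on UNIV (\<lambda>t::real. sinh t ^ 2 * cosh t)" by (intro continuous_intros)
    show "continuous_on UNIV (\<lambda>t::real. (cosh t ^ 2 + sinh t ^ 2) / \<beta>)" using b by (intro continuous_intros) auto
  qed simp
  also have "\<dots> = half_line_integral (\<lambda>t. (cosh t ^ 2 + sinh t ^ 2) * cosh_weight \<beta> t) / \<beta>"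
    by (subst set_integral_divide_zero[symmetric]) (simp add: field_simps)
  finally show ?thesis by (simp add: besselK2_eq_half_line)
qed

lemma half_line_integral_sinh4:
  assumes b: "\<beta> > 0"
  shows "half_line_integral (\<lambda>t. sinh t ^ 4 * cosh_weight \<beta> t) = 3 * besselK 2 \<beta> / \<beta>^2"
proof -
  have "half_line_integral (\<lambda>t. sinh t ^ 4 * cosh_weight \<beta> t) = half_line_integral (\<lambda>t. (3 * (sinh t ^ 2 * cosh t) / \<beta>) * cosh_weight \<beta> t)"
  proof (rule half_line_integral_by_parts[OF b, where c="1 + 3/\<beta>" and s="\<lambda>t. - (sinh t ^ 3) / \<beta>"])
    fix t :: real
    show "DERIV (\<lambda>t. - (sinh t ^ 3) / \<beta> * cosh_weight \<beta> t) t :> (sinh t ^ 4 - 3 * (sinh t ^ 2 * cosh t) / \<beta>) * cosh_weight \<beta> t"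
      unfolding cosh_weight_def using b
      by (auto intro!: derivative_eq_intros simp: field_simps power2_eq_square eval_nat_numeral)
    assume t: "t \<ge> 0"
    show "\<bar>sinh t ^ 4\<bar> \<le> (1 + 3 / \<beta>) * cosh t ^ 5"
      using abs_le_const_bound(1)[OF abs_sinh_pow_cosh_pow_le_cosh5[of 4 0 t] b, of 1] by simp
    show "\<bar>3 * (sinh t ^ 2 * cosh t) / \<beta>\<bar> \<le> (1 + 3 / \<beta>) * cosh t ^ 5"
      using abs_le_const_bound(2)[OF abs_sinh_pow_cosh_pow_le_cosh5[of 2 1 t] b, of 3] by simp
    show "\<bar>- (sinh t ^ 3) / \<beta>\<bar> \<le> (1 + 3 / \<beta>) * cosh t ^ 5"
      using abs_le_const_bound(2)[OF abs_sinh_pow_cosh_pow_le_cosh5[of 3 0 t] b, of 1] by simp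
  next
    show "continuous_on UNIV (\<lambda>t::real. sinh t ^ 4)" by (intro continuous_intros)
    show "continuous_on UNIV (\<lambda>t::real. 3 * (sinh t ^ 2 * cosh t) / \<beta>)" using b by (intro continuous_intros) auto
  qed simp
  also have "(\<lambda>t. 3 * (sinh t ^ 2 * cosh t) / \<beta> * cosh_weight \<beta> t) = (\<lambda>t. (3/\<beta>) * (sinh t ^ 2 * cosh t * cosh_weight \<beta> t))"
    by (auto simp: field_simps)
  also have "half_line_integral \<dots> = 3 * half_line_integral (\<lambda>t. sinh t ^ 2 * cosh t * cosh_weight \<beta> t) / \<beta>"
    by (simp add: set_integral_mult_right)
  finally show ?thesis using half_line_integral_sinh2_cosh[OF b] by (simp add: power2_eq_square)
qed

lemma half_line_integral_add3:
  assumes "set_integrable lborel {0..} f" "set_integrable lborel {0..} g" "set_integrable lborel {0..} h"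
  shows "half_line_integral (\<lambda>s. f s + g s + c * h s) = half_line_integral f + half_line_integral g + c * half_line_integral h"
proof -
  have "half_line_integral (\<lambda>s. f s + g s + c * h s) = half_line_integral (\<lambda>s. f s + g s) + half_line_integral (\<lambda>s. c * h s)"
    by (rule set_integral_add) (auto intro!: set_integral_add assms set_integrable_mult_right)
  also have "half_line_integral (\<lambda>s. f s + g s) = half_line_integral f + half_line_integral g" by (rule set_integral_add) (auto intro!: assms)
  finally show ?thesis by (simp add: set_integral_mult_right)
qed

lemma half_line_integral_energy:
  assumes b: "\<beta> > 0"
  shows "half_line_integral (\<lambda>s. (cosh s + 1/\<beta>) * sinh s ^ 2 * cosh s * cosh_weight \<beta> s)
       = besselK 1 \<beta> / \<beta> + 3 * besselK 2 \<beta> / \<beta>^2 + (1/\<beta>) * (besselK 2 \<beta> / \<beta>)"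
proof -
  have eq: "(\<lambda>s. (cosh s + 1/\<beta>) * sinh s ^ 2 * cosh s * cosh_weight \<beta> s)
    = (\<lambda>s. sinh s ^ 2 * cosh_weight \<beta> s + sinh s ^ 4 * cosh_weight \<beta> s + (1/\<beta>) * (sinh s ^ 2 * cosh s * cosh_weight \<beta> s))"
  proof
    fix s :: real
    have cc: "cosh s * cosh s = 1 + sinh s ^ 2" by (simp add: cosh_square_eq power2_eq_square[symmetric])
    have s4: "sinh s ^ 4 = sinh s ^ 2 * sinh s ^ 2" by (simp flip: power_add)
    have "(cosh s + 1/\<beta>) * sinh s ^ 2 * cosh s * cosh_weight \<beta> s
       = (cosh s * cosh s) * sinh s ^ 2 * cosh_weight \<beta> s + (1/\<beta>) * (sinh s ^ 2 * cosh s * cosh_weight \<beta> s)"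
      by (simp add: algebra_simps)
    also have "\<dots> = sinh s ^ 2 * cosh_weight \<beta> s + sinh s ^ 4 * cosh_weight \<beta> s + (1/\<beta>) * (sinh s ^ 2 * cosh s * cosh_weight \<beta> s)"
      unfolding cc s4 by (simp add: algebra_simps)
    finally show "(cosh s + 1/\<beta>) * sinh s ^ 2 * cosh s * cosh_weight \<beta> s
       = sinh s ^ 2 * cosh_weight \<beta> s + sinh s ^ 4 * cosh_weight \<beta> s + (1/\<beta>) * (sinh s ^ 2 * cosh s * cosh_weight \<beta> s)" .
  qed
  have i1: "set_integrable lborel {0..} (\<lambda>s. sinh s ^ 2 * cosh_weight \<beta> s)"
    using set_integrable_sinh_cosh_weight[OF b, of 2 0] by simp
  have i2: "set_integrable lborel {0..} (\<lambda>s. sinh s ^ 4 * cosh_weight \<beta> s)"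
    using set_integrable_sinh_cosh_weight[OF b, of 4 0] by simp
  have i3: "set_integrable lborel {0..} (\<lambda>s. sinh s ^ 2 * cosh s * cosh_weight \<beta> s)"
    using set_integrable_sinh_cosh_weight[OF b, of 2 1] by simp
  show ?thesis unfolding eq half_line_integral_add3[OF i1 i2 i3] half_line_integral_sinh2[OF b] half_line_integral_sinh2_cosh[OF b] half_line_integral_sinh4[OF b] by simp
qed

section \<open>Radial integrals on R^3\<close>

lemma ennreal_eq_nn_integral_neg_deriv:
  fixes \<psi> \<psi>' :: "real \<Rightarrow> real"
  assumes der: "\<And>t. t \<ge> 0 \<Longrightarrow> DERIV \<psi> t :> \<psi>' t"
    and neg: "\<And>t. t \<ge> 0 \<Longrightarrow> \<psi>' t \<le> 0"
    and c': "continuous_on UNIV \<psi>'"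
    and lim: "(\<psi> \<longlongrightarrow> 0) at_top"
    and a: "a \<ge> 0"
  shows "ennreal (\<psi> a) = (\<integral>\<^sup>+t. ennreal (- \<psi>' t) * indicator {a..} t \<partial>lborel)"
proof -
  have "(\<integral>\<^sup>+t. ennreal (- \<psi>' t) * indicator {a..} t \<partial>lborel) = ennreal (0 - (- \<psi> a))"
  proof (rule nn_integral_FTC_atLeast[where F="\<lambda>t. - \<psi> t"])
    show "(\<lambda>t. - \<psi>' t) \<in> borel_measurable borel"
      using c' by (intro borel_measurable_continuous_onI continuous_intros) 
    show "DERIV (\<lambda>t. - \<psi> t) x :> - \<psi>' x" if "a \<le> x" for x
      using der[of x] that a by (auto intro!: derivative_eq_intros)
    show "0 \<le> - \<psi>' x" if "a \<le> x" for x using neg[of x] that a by auto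
    show "((\<lambda>t. - \<psi> t) \<longlongrightarrow> 0) at_top" using tendsto_minus[OF lim] by simp
  qed
  thus ?thesis by simp
qed

lemma nn_integral_cmult_neg_deriv:
  fixes \<psi> \<psi>' :: "real \<Rightarrow> real"
  assumes der: "\<And>t. t \<ge> 0 \<Longrightarrow> DERIV \<psi> t :> \<psi>' t"
    and neg: "\<And>t. t \<ge> 0 \<Longrightarrow> \<psi>' t \<le> 0"
    and c': "continuous_on UNIV \<psi>'"
    and lim: "(\<psi> \<longlongrightarrow> 0) at_top"
    and a: "a \<ge> 0" and A: "A \<ge> 0"
  shows "(\<integral>\<^sup>+t. ennreal A * (ennreal (- \<psi>' t) * indicator {a..} t) \<partial>lborel) = ennreal (A * \<psi> a)"
proof -
  have m: "(\<lambda>t. - \<psi>' t) \<in> borel_measurable borel"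
    using c' by (intro borel_measurable_continuous_onI continuous_intros)
  have "(\<integral>\<^sup>+t. ennreal A * (ennreal (- \<psi>' t) * indicator {a..} t) \<partial>lborel)
      = ennreal A * (\<integral>\<^sup>+t. ennreal (- \<psi>' t) * indicator {a..} t \<partial>lborel)"
    by (rule nn_integral_cmult)
      (simp, intro borel_measurable_times_ennreal measurable_compose[OF m measurable_ennreal], auto)
  also have "\<dots> = ennreal A * ennreal (\<psi> a)"
    using ennreal_eq_nn_integral_neg_deriv[OF der neg c' lim a] by simp
  finally show ?thesis by (simp add: ennreal_mult'[OF A])
qed

lemma arsinh_le_iff: "arsinh (x::real) \<le> t \<longleftrightarrow> x \<le> sinh t"
  by (metis sinh_real_le_iff sinh_arsinh_real)

lemma continuous_on_arsinh_comp [continuous_intros]: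
  fixes f :: "'a::topological_space \<Rightarrow> real"
  assumes "continuous_on A f"
  shows "continuous_on A (\<lambda>x. arsinh (f x))"
  by (rule continuous_on_compose2[OF continuous_on_arsinh assms]) auto

lemma arsinh_nonneg [simp]: "x \<ge> 0 \<Longrightarrow> arsinh (x::real) \<ge> 0"
  by (metis arsinh_real_neg_iff not_less)

lemma continuous_on_compose_UNIV:
  assumes "continuous_on UNIV g" "continuous_on A f"
  shows "continuous_on A (\<lambda>x. g (f x))"
  by (rule continuous_on_compose2[OF assms(1) assms(2)]) auto

lemma borel_measurable_pair_indicator:
  fixes g :: "'a::euclidean_space \<times> 'b::euclidean_space \<Rightarrow> real" and S
  assumes "continuous_on UNIV g" "closed S"
  shows "(\<lambda>x. ennreal (g x) * indicator S x) \<in> borel_measurable (lborel \<Otimes>\<^sub>M lborel)"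
proof -
  have "(\<lambda>x. ennreal (g x) * indicator S x) \<in> borel_measurable borel"
    using assms by (intro borel_measurable_times_ennreal measurable_compose[OF _ measurable_ennreal]
       borel_measurable_continuous_onI borel_measurable_indicator borel_closed) auto
  thus ?thesis unfolding lborel_prod by simp
qed

lemma nn_integral_radial_layer_cake:
  fixes \<psi> \<psi>' :: "real \<Rightarrow> real"
  assumes der: "\<And>t. t \<ge> 0 \<Longrightarrow> DERIV \<psi> t :> \<psi>' t"
    and neg: "\<And>t. t \<ge> 0 \<Longrightarrow> \<psi>' t \<le> 0"
    and c': "continuous_on UNIV \<psi>'"
    and lim: "(\<psi> \<longlongrightarrow> 0) at_top"
  shows "(\<integral>\<^sup>+q. ennreal (\<psi> (arsinh (norm q))) \<partial>(lborel :: mom measure))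
       = (\<integral>\<^sup>+t. ennreal (- \<psi>' t) * (ennreal (unit_ball_vol 3 * sinh t ^ 3) * indicator {0..} t) \<partial>lborel)"
proof -
  define V where "V = unit_ball_vol 3"
  define S where "S = {x :: mom \<times> real. arsinh (norm (fst x)) \<le> snd x}"
  have clS: "closed S" unfolding S_def
    by (intro closed_Collect_le continuous_intros)
  have "(\<integral>\<^sup>+q. ennreal (\<psi> (arsinh (norm q))) \<partial>(lborel :: mom measure))
      = (\<integral>\<^sup>+q. (\<integral>\<^sup>+t. ennreal (- \<psi>' t) * indicator S (q, t) \<partial>lborel) \<partial>lborel)"
  proof (intro nn_integral_cong)
    fix q :: mom
    show "ennreal (\<psi> (arsinh (norm q))) = (\<integral>\<^sup>+t. ennreal (- \<psi>' t) * indicator S (q, t) \<partial>lborel)"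
      by (subst ennreal_eq_nn_integral_neg_deriv[OF der neg c' lim]) (auto simp: S_def indicator_def intro!: nn_integral_cong)
  qed
  also have "\<dots> = (\<integral>\<^sup>+t. (\<integral>\<^sup>+q. ennreal (- \<psi>' t) * indicator S (q, t) \<partial>lborel) \<partial>lborel)"
  proof (rule lborel_pair.Fubini'[symmetric])
    have "(\<lambda>x. ennreal (- \<psi>' (snd x)) * indicator S x) \<in> borel_measurable (lborel \<Otimes>\<^sub>M lborel)"
      by (rule borel_measurable_pair_indicator[OF _ clS]) (intro continuous_intros continuous_on_compose_UNIV[OF c'])
    thus "(\<lambda>(q, t). ennreal (- \<psi>' t) * indicator S (q, t)) \<in> borel_measurable (lborel \<Otimes>\<^sub>M lborel)"
      by (simp add: case_prod_beta')
  qed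
  also have "\<dots> = (\<integral>\<^sup>+t. ennreal (- \<psi>' t) * (ennreal (V * sinh t ^ 3) * indicator {0..} t) \<partial>lborel)"
  proof (intro nn_integral_cong)
    fix t :: real
    show "(\<integral>\<^sup>+q. ennreal (- \<psi>' t) * indicator S (q, t) \<partial>lborel) = ennreal (- \<psi>' t) * (ennreal (V * sinh t ^ 3) * indicator {0..} t)"
    proof (cases "t \<ge> 0")
      case True
      have "\<And>q. (indicator S (q, t) :: ennreal) = indicator (cball 0 (sinh t)) q"
        by (auto simp: S_def indicator_def arsinh_le_iff)
      hence "(\<integral>\<^sup>+q. ennreal (- \<psi>' t) * indicator S (q, t) \<partial>lborel) = ennreal (- \<psi>' t) * emeasure lborel (cball (0::mom) (sinh t))"
        by (simp add: nn_integral_cmult_indicator)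
      thus ?thesis using True by (simp add: emeasure_cball V_def)
    next
      case False
      hence "\<And>q. indicator S (q, t) = (0::ennreal)" 
        by (auto simp: S_def indicator_def) (meson arsinh_nonneg norm_ge_zero order_trans)
      thus ?thesis using False by simp
    qed
  qed
  finally show ?thesis unfolding V_def .
qed

lemma ennreal_sinh_cube_eq_nn_integral:
  assumes t: "t \<ge> 0" and V0: "V \<ge> 0"
  shows "ennreal (V * sinh t ^ 3) = (\<integral>\<^sup>+s. ennreal (3 * V * (sinh s ^ 2 * cosh s)) * indicator {0..t} s \<partial>lborel)"
proof -
  have "(\<integral>\<^sup>+s. ennreal (3 * V * (sinh s ^ 2 * cosh s)) * indicator {0..t} s \<partial>lborel)
      = ennreal (V * sinh t ^ 3 - V * sinh 0 ^ 3)"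
  proof (rule nn_integral_FTC_Icc[where F="\<lambda>s. V * sinh s ^ 3"])
    show "(\<lambda>s. 3 * V * (sinh s ^ 2 * cosh s)) \<in> borel_measurable borel"
      by (intro borel_measurable_continuous_onI continuous_intros)
    show "DERIV (\<lambda>s. V * sinh s ^ 3) x :> 3 * V * (sinh x ^ 2 * cosh x)" for x
      by (auto intro!: derivative_eq_intros simp: field_simps power2_eq_square eval_nat_numeral)
    show "0 \<le> 3 * V * (sinh x ^ 2 * cosh x)" for x using V0 by simp
  qed (use t in auto)
  thus ?thesis by simp
qed

lemma borel_measurable_neg_deriv_sinh_density:
  fixes \<psi>' :: "real \<Rightarrow> real"
  assumes c': "continuous_on UNIV \<psi>'" and V0: "V \<ge> 0"
  defines "T \<equiv> {x :: real \<times> real. 0 \<le> fst x \<and> fst x \<le> snd x}"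
  shows "(\<lambda>(s, t). ennreal (- \<psi>' t) * ennreal (3 * V * (sinh s ^ 2 * cosh s)) * indicator T (s, t))
           \<in> borel_measurable (lborel \<Otimes>\<^sub>M lborel)"
proof -
  have clT: "closed T" unfolding T_def
    by (intro closed_Collect_conj closed_Collect_le continuous_intros)
  have "(\<lambda>x. ennreal (- \<psi>' (snd x) * (3 * V * (sinh (fst x) ^ 2 * cosh (fst x)))) * indicator T x) \<in> borel_measurable (lborel \<Otimes>\<^sub>M lborel)"
    by (rule borel_measurable_pair_indicator[OF _ clT]) (intro continuous_intros continuous_on_compose_UNIV[OF c'])
  moreover have "(\<lambda>x. ennreal (- \<psi>' (snd x) * (3 * V * (sinh (fst x) ^ 2 * cosh (fst x)))) * indicator T x)
    = (\<lambda>(s, t). ennreal (- \<psi>' t) * ennreal (3 * V * (sinh s ^ 2 * cosh s)) * indicator T (s, t))"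
  proof (intro ext, clarsimp)
    fix s t :: real
    show "ennreal (- (\<psi>' t * (3 * V * ((sinh s)\<^sup>2 * cosh s)))) * indicator T (s, t) =
         ennreal (- \<psi>' t) * ennreal (3 * V * ((sinh s)\<^sup>2 * cosh s)) * indicator T (s, t)"
    proof (cases "(s, t) \<in> T")
      case True
      hence "s \<ge> 0" by (auto simp: T_def)
      hence "3 * V * ((sinh s)\<^sup>2 * cosh s) \<ge> 0" using V0 by simp
      from ennreal_mult''[OF this, of "- \<psi>' t"] show ?thesis by simp
    qed simp
  qed
  ultimately show ?thesis
    by simp
qed

lemma nn_integral_neg_deriv_mult_sinh_cube:
  fixes \<psi> \<psi>' :: "real \<Rightarrow> real"
  assumes der: "\<And>t. t \<ge> 0 \<Longrightarrow> DERIV \<psi> t :> \<psi>' t"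
    and neg: "\<And>t. t \<ge> 0 \<Longrightarrow> \<psi>' t \<le> 0"
    and c': "continuous_on UNIV \<psi>'"
    and lim: "(\<psi> \<longlongrightarrow> 0) at_top"
    and V0: "V \<ge> 0"
  shows "(\<integral>\<^sup>+t. ennreal (- \<psi>' t) * (ennreal (V * sinh t ^ 3) * indicator {0..} t) \<partial>lborel)
       = (\<integral>\<^sup>+s. ennreal (3 * V * (\<psi> s * sinh s ^ 2 * cosh s)) * indicator {0..} s \<partial>lborel)"
proof -
  define T where "T = {x :: real \<times> real. 0 \<le> fst x \<and> fst x \<le> snd x}"
  have "(\<integral>\<^sup>+t. ennreal (- \<psi>' t) * (ennreal (V * sinh t ^ 3) * indicator {0..} t) \<partial>lborel) = (\<integral>\<^sup>+t. (\<integral>\<^sup>+s. ennreal (- \<psi>' t) * ennreal (3 * V * (sinh s ^ 2 * cosh s)) * indicator T (s, t) \<partial>lborel) \<partial>lborel)"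
  proof (intro nn_integral_cong)
    fix t :: real
    show "ennreal (- \<psi>' t) * (ennreal (V * sinh t ^ 3) * indicator {0..} t) =
      (\<integral>\<^sup>+s. ennreal (- \<psi>' t) * ennreal (3 * V * (sinh s ^ 2 * cosh s)) * indicator T (s, t) \<partial>lborel)"
    proof (cases "t \<ge> 0")
      case True
      from ennreal_sinh_cube_eq_nn_integral[OF True V0]
      have "ennreal (- \<psi>' t) * (ennreal (V * sinh t ^ 3) * indicator {0..} t)
          = ennreal (- \<psi>' t) * (\<integral>\<^sup>+s. ennreal (3 * V * (sinh s ^ 2 * cosh s)) * indicator {0..t} s \<partial>lborel)"
        using True by simp
      also have "\<dots> = (\<integral>\<^sup>+s. ennreal (- \<psi>' t) * (ennreal (3 * V * (sinh s ^ 2 * cosh s)) * indicator {0..t} s) \<partial>lborel)"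
      proof (rule nn_integral_cmult[symmetric])
        have m1: "(\<lambda>s. 3 * V * (sinh s^2 * cosh s)) \<in> borel_measurable borel"
          by (intro borel_measurable_continuous_onI continuous_intros)
        show "(\<lambda>s. ennreal (3 * V * (sinh s ^ 2 * cosh s)) * indicator {0..t} s) \<in> borel_measurable lborel"
          by (simp, intro borel_measurable_times_ennreal measurable_compose[OF m1 measurable_ennreal]) auto
      qed
      also have "\<dots> = (\<integral>\<^sup>+s. ennreal (- \<psi>' t) * ennreal (3 * V * (sinh s ^ 2 * cosh s)) * indicator T (s, t) \<partial>lborel)"
        by (intro nn_integral_cong) (auto simp: T_def indicator_def)
      finally show ?thesis .
    next
      case False
      hence "\<And>s. indicator T (s, t) = (0::ennreal)" by (auto simp: T_def indicator_def)
      thus ?thesis using False by simp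
    qed
  qed
  also have "\<dots> = (\<integral>\<^sup>+s. (\<integral>\<^sup>+t. ennreal (- \<psi>' t) * ennreal (3 * V * (sinh s ^ 2 * cosh s)) * indicator T (s, t) \<partial>lborel) \<partial>lborel)"
    unfolding T_def by (rule lborel_pair.Fubini'[OF borel_measurable_neg_deriv_sinh_density[OF c' V0]])
  also have "\<dots> = (\<integral>\<^sup>+s. ennreal (3 * V * (\<psi> s * sinh s ^ 2 * cosh s)) * indicator {0..} s \<partial>lborel)"
  proof (intro nn_integral_cong)
    fix s :: real
    show "(\<integral>\<^sup>+t. ennreal (- \<psi>' t) * ennreal (3 * V * (sinh s ^ 2 * cosh s)) * indicator T (s, t) \<partial>lborel)
       = ennreal (3 * V * (\<psi> s * sinh s ^ 2 * cosh s)) * indicator {0..} s"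
    proof (cases "s \<ge> 0")
      case True
      have "(\<integral>\<^sup>+t. ennreal (- \<psi>' t) * ennreal (3 * V * (sinh s ^ 2 * cosh s)) * indicator T (s, t) \<partial>lborel)
          = (\<integral>\<^sup>+t. ennreal (3 * V * (sinh s ^ 2 * cosh s)) * (ennreal (- \<psi>' t) * indicator {s..} t) \<partial>lborel)"
        using True by (intro nn_integral_cong) (auto simp: T_def indicator_def mult.commute)
      also have "\<dots> = ennreal (3 * V * (sinh s ^ 2 * cosh s) * \<psi> s)"
        using V0 cosh_real_pos[of s] by (intro nn_integral_cmult_neg_deriv[OF der neg c' lim True] mult_nonneg_nonneg) auto
      finally show ?thesis using True by (simp add: mult_ac)
    next
      case False
      hence "\<And>t. indicator T (s, t) = (0::ennreal)" by (auto simp: T_def indicator_def)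
      thus ?thesis using False by simp
    qed
  qed
  finally show ?thesis .
qed

lemma nn_integral_radial:
  fixes \<psi> \<psi>' :: "real \<Rightarrow> real"
  assumes der: "\<And>t. t \<ge> 0 \<Longrightarrow> DERIV \<psi> t :> \<psi>' t"
    and neg: "\<And>t. t \<ge> 0 \<Longrightarrow> \<psi>' t \<le> 0"
    and c': "continuous_on UNIV \<psi>'"
    and lim: "(\<psi> \<longlongrightarrow> 0) at_top"
  shows "(\<integral>\<^sup>+q. ennreal (\<psi> (arsinh (norm q))) \<partial>(lborel :: mom measure))
       = (\<integral>\<^sup>+s. ennreal (3 * unit_ball_vol 3 * (\<psi> s * sinh s ^ 2 * cosh s)) * indicator {0..} s \<partial>lborel)"
  using nn_integral_radial_layer_cake[OF der neg c' lim]
    nn_integral_neg_deriv_mult_sinh_cube[OF der neg c' lim, of "unit_ball_vol 3"] by simp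

lemma nonneg_if_decreasing_tendsto_0:
  fixes \<psi> \<psi>' :: "real \<Rightarrow> real"
  assumes der: "\<And>t. t \<ge> 0 \<Longrightarrow> DERIV \<psi> t :> \<psi>' t"
    and neg: "\<And>t. t \<ge> 0 \<Longrightarrow> \<psi>' t \<le> 0"
    and lim: "(\<psi> \<longlongrightarrow> 0) at_top" and a: "a \<ge> 0"
  shows "\<psi> a \<ge> 0"
proof -
  have "eventually (\<lambda>x. \<psi> x \<le> \<psi> a) at_top"
    unfolding eventually_at_top_linorder
  proof (intro exI[of _ a] allI impI)
    fix x assume "x \<ge> a"
    thus "\<psi> x \<le> \<psi> a"
    proof (rule DERIV_nonpos_imp_nonincreasing)
      fix y assume "a \<le> y" "y \<le> x"
      hence "y \<ge> 0" using a by linarith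
      thus "\<exists>d. DERIV \<psi> y :> d \<and> d \<le> 0" using der neg by blast
    qed
  qed
  from tendsto_upperbound[OF lim this] show ?thesis by simp
qed

lemma set_integrable_radial_density:
  fixes g :: "real \<Rightarrow> real"
  assumes b: "\<beta> > 0" and cg: "continuous_on UNIV g"
    and bg: "\<And>t. t \<ge> 0 \<Longrightarrow> \<bar>g t\<bar> \<le> c * cosh t ^ 2"
  shows "set_integrable lborel {0..} (\<lambda>s. g s * sinh s ^ 2 * cosh s * cosh_weight \<beta> s)"
proof (rule set_integrable_cosh_weight[OF b, where c=c])
  show "continuous_on UNIV (\<lambda>s. g s * sinh s ^ 2 * cosh s)" by (intro continuous_intros cg)
  fix t :: real assume t: "t \<ge> 0"
  have c0: "c \<ge> 0" using bg[of 0] by simp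
  have "\<bar>g t * sinh t ^ 2 * cosh t\<bar> = \<bar>g t\<bar> * \<bar>sinh t ^ 2 * cosh t\<bar>" by (simp add: abs_mult)
  also have "\<dots> \<le> (c * cosh t ^ 2) * cosh t ^ 3"
    using bg[OF t] abs_sinh_pow_cosh_pow_le[of t 2 1] c0 by (intro mult_mono) auto
  also have "\<dots> = c * cosh t ^ 5" by (simp add: power_add[symmetric] mult.assoc)
  finally show "\<bar>g t * sinh t ^ 2 * cosh t\<bar> \<le> c * cosh t ^ 5" .
qed

lemma radial_integral:
  fixes g g' :: "real \<Rightarrow> real"
  assumes b: "\<beta> > 0"
    and cg: "continuous_on UNIV g" and cg': "continuous_on UNIV g'"
    and der: "\<And>t. DERIV (\<lambda>t. g t * cosh_weight \<beta> t) t :> g' t * cosh_weight \<beta> t"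
    and neg: "\<And>t. t \<ge> 0 \<Longrightarrow> g' t \<le> 0"
    and bg: "\<And>t. t \<ge> 0 \<Longrightarrow> \<bar>g t\<bar> \<le> c * cosh t ^ 2"
  shows "integrable lborel (\<lambda>q::mom. g (arsinh (norm q)) * cosh_weight \<beta> (arsinh (norm q)))"
    and "(LINT q|lborel. g (arsinh (norm (q::mom))) * cosh_weight \<beta> (arsinh (norm q)) :: real)
         = 3 * unit_ball_vol 3 * half_line_integral (\<lambda>s. g s * sinh s ^ 2 * cosh s * cosh_weight \<beta> s)"
proof -
  define \<psi> where "\<psi> = (\<lambda>t. g t * cosh_weight \<beta> t)"
  define \<psi>' where "\<psi>' = (\<lambda>t. g' t * cosh_weight \<beta> t)"
  define V where "V = unit_ball_vol 3"
  have V0: "V \<ge> 0" unfolding V_def by simp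
  have bg5: "\<bar>g t\<bar> \<le> c * cosh t ^ 5" if "t \<ge> 0" for t
  proof -
    have "cosh t ^ 2 \<le> cosh t ^ 5" using cosh_real_ge_1[of t] by (intro power_increasing) auto
    thus ?thesis using bg[OF that] bg[of 0] by (simp add: mult_left_mono order_trans)
  qed
  have der': "DERIV \<psi> t :> \<psi>' t" for t unfolding \<psi>_def \<psi>'_def by (rule der)
  have neg': "\<psi>' t \<le> 0" if "t \<ge> 0" for t
    unfolding \<psi>'_def using neg[OF that] by (simp add: cosh_weight_def mult_nonpos_nonneg)
  have c': "continuous_on UNIV \<psi>'" unfolding \<psi>'_def cosh_weight_def by (intro continuous_intros cg')
  have cpsi: "continuous_on UNIV \<psi>" unfolding \<psi>_def cosh_weight_def by (intro continuous_intros cg)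
  have lim: "(\<psi> \<longlongrightarrow> 0) at_top" unfolding \<psi>_def by (rule tendsto_cosh_weight_zero[OF b bg5])
  have pos: "\<psi> a \<ge> 0" if "a \<ge> 0" for a by (rule nonneg_if_decreasing_tendsto_0[OF der' neg' lim that])
  define h where "h = (\<lambda>s. indicator {0..} s *\<^sub>R (3 * V * (g s * sinh s ^ 2 * cosh s * cosh_weight \<beta> s)))"
  have ih: "integrable lborel h"
    using set_integrable_mult_right[OF set_integrable_radial_density[OF b cg bg], of "3 * V"]
    unfolding h_def set_integrable_def by simp
  have h0: "h s \<ge> 0" for s
  proof -
    have "0 \<le> 3 * V * (\<psi> s * (sinh s ^ 2 * cosh s))" if "s \<ge> 0"
      using pos[OF that] V0 by (intro mult_nonneg_nonneg) auto
    thus ?thesis by (auto simp: h_def indicator_def \<psi>_def mult_ac)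
  qed
  have "(\<integral>\<^sup>+q. ennreal (\<psi> (arsinh (norm q))) \<partial>(lborel :: mom measure))
      = (\<integral>\<^sup>+s. ennreal (3 * V * (\<psi> s * sinh s ^ 2 * cosh s)) * indicator {0..} s \<partial>lborel)"
    unfolding V_def by (rule nn_integral_radial[OF der' neg' c' lim])
  also have "\<dots> = (\<integral>\<^sup>+s. ennreal (h s) \<partial>lborel)"
    by (intro nn_integral_cong) (auto simp: h_def \<psi>_def indicator_def mult_ac)
  also have "\<dots> = ennreal (integral\<^sup>L lborel h)"
    by (rule nn_integral_eq_integral[OF ih]) (simp add: h0)
  finally have "has_bochner_integral lborel (\<lambda>q::mom. \<psi> (arsinh (norm q))) (integral\<^sup>L lborel h)"
    by (intro has_bochner_integral_nn_integral integral_nonneg_AE)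
      (auto intro!: pos h0 borel_measurable_continuous_onI continuous_on_compose_UNIV[OF cpsi] continuous_intros)
  moreover have "integral\<^sup>L lborel h = 3 * V * half_line_integral (\<lambda>s. g s * sinh s ^ 2 * cosh s * cosh_weight \<beta> s)"
    unfolding h_def set_lebesgue_integral_def by (simp flip: integral_mult_right_zero add: mult_ac)
  ultimately have hb: "has_bochner_integral lborel (\<lambda>q::mom. g (arsinh (norm q)) * cosh_weight \<beta> (arsinh (norm q)))
      (3 * unit_ball_vol 3 * half_line_integral (\<lambda>s. g s * sinh s ^ 2 * cosh s * cosh_weight \<beta> s))"
    by (simp add: \<psi>_def V_def)
  show "integrable lborel (\<lambda>q::mom. g (arsinh (norm q)) * cosh_weight \<beta> (arsinh (norm q)))"
    using hb by (rule integrable.intros)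
  show "(LINT q|lborel. g (arsinh (norm (q::mom))) * cosh_weight \<beta> (arsinh (norm q)) :: real)
         = 3 * unit_ball_vol 3 * half_line_integral (\<lambda>s. g s * sinh s ^ 2 * cosh s * cosh_weight \<beta> s)"
    using hb by (rule has_bochner_integral_integral_eq)
qed

section \<open>The energy q0 and the integrals of exp(-beta q0)\<close>

lemma q0_eq_cosh_arsinh: "q0 q = cosh (arsinh (norm q))"
  by (simp add: q0_def cosh_arsinh_real add.commute)

lemma q0_ge1: "q0 q \<ge> 1"
  by (simp add: q0_def)

lemma q0_pos: "q0 q > 0"
  using q0_ge1[of q] by linarith

lemma abs_q0 [simp]: "\<bar>q0 q\<bar> = q0 q" using q0_pos[of q] by simp

lemma q0_neg [simp]: "q0 (- q) = q0 q" by (simp add: q0_def)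

lemma q0_nz [simp]: "q0 q \<noteq> 0" using q0_pos[of q] by simp

lemma continuous_on_q0 [continuous_intros]: "continuous_on A q0"
  unfolding q0_def by (intro continuous_intros)

lemma q0_sq_eq: "q0 q ^ 2 = 1 + (norm q)^2"
  by (simp add: q0_def)

lemma norm_le_q0: "norm q \<le> q0 q"
  unfolding q0_def by (rule real_le_rsqrt) simp

lemma abs_component_le_q0: "\<bar>q $ i\<bar> \<le> q0 q"
  using component_le_norm_cart[of q i] norm_le_q0[of q] by simp

lemma abs_component_le_norm: "\<bar>c $ i\<bar> \<le> norm (c::mom)"
  using component_le_norm_cart[of c i] by simp

lemma abs_inner_le_q0: "\<bar>c \<bullet> q\<bar> \<le> norm c * q0 q"
  using Cauchy_Schwarz_ineq2[of c q] norm_le_q0[of q]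
  by (meson mult_left_mono norm_ge_zero order_trans)

lemma q0_le_q0_sq: "q0 q \<le> q0 q ^ 2"
  using q0_ge1[of q] by (simp add: power2_eq_square)

lemma one_le_q0_sq: "1 \<le> q0 q ^ 2"
  using q0_ge1[of q] by (simp add: one_le_power)

lemma exp_q0_eq_cosh_weight: "exp (- \<beta> * q0 q) = cosh_weight \<beta> (arsinh (norm q))"
  by (simp add: cosh_weight_def q0_eq_cosh_arsinh)

lemma integral_exp_q0:
  assumes b: "\<beta> > 0"
  shows "integrable lborel (\<lambda>q. exp (- \<beta> * q0 q))"
    and "(LINT q|lborel. exp (- \<beta> * q0 q)) = 3 * unit_ball_vol 3 * besselK 2 \<beta> / \<beta>"
proof -
  have der: "DERIV (\<lambda>t. 1 * cosh_weight \<beta> t) t :> (- \<beta> * sinh t) * cosh_weight \<beta> t" for t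
    unfolding cosh_weight_def by (auto intro!: derivative_eq_intros simp: field_simps)
  note r = radial_integral[OF b _ _ der, where c=1, simplified]
  have c: "continuous_on UNIV (\<lambda>t::real. - (\<beta> * sinh t))" by (intro continuous_intros)
  have bd: "\<And>t::real. 1 \<le> cosh t ^ 2" by (rule one_le_power[OF cosh_real_ge_1])
  show "integrable lborel (\<lambda>q. exp (- \<beta> * q0 q))"
    unfolding exp_q0_eq_cosh_weight using r(1)[OF c] b bd by simp
  have "(LINT q|lborel. exp (- \<beta> * q0 q)) = 3 * unit_ball_vol 3 * half_line_integral (\<lambda>s. sinh s ^ 2 * cosh s * cosh_weight \<beta> s)"
    unfolding exp_q0_eq_cosh_weight using r(2)[OF c] b bd by simp
  thus "(LINT q|lborel. exp (- \<beta> * q0 q)) = 3 * unit_ball_vol 3 * besselK 2 \<beta> / \<beta>"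
    using half_line_integral_sinh2_cosh[OF b] by simp
qed

lemma integral_exp_q0_div_q0:
  assumes b: "\<beta> > 0"
  shows "integrable lborel (\<lambda>q. exp (- \<beta> * q0 q) / q0 q)"
    and "(LINT q|lborel. exp (- \<beta> * q0 q) / q0 q) = 3 * unit_ball_vol 3 * besselK 1 \<beta> / \<beta>"
proof -
  have der: "DERIV (\<lambda>t. (1 / cosh t) * cosh_weight \<beta> t) t :> (- (\<beta> * sinh t / cosh t + sinh t / cosh t ^ 2)) * cosh_weight \<beta> t" for t
    unfolding cosh_weight_def by (auto intro!: derivative_eq_intros simp: field_simps power2_eq_square)
  have c1: "continuous_on UNIV (\<lambda>t::real. 1 / cosh t)" by (intro continuous_intros) auto
  have c2: "continuous_on UNIV (\<lambda>t::real. - (\<beta> * sinh t / cosh t + sinh t / cosh t ^ 2))"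
    by (intro continuous_intros) auto
  have neg: "- (\<beta> * sinh t / cosh t + sinh t / cosh t ^ 2) \<le> 0" if "t \<ge> 0" for t
  proof -
    have "0 \<le> \<beta> * sinh t / cosh t + sinh t / cosh t ^ 2" using that b
      by (intro add_nonneg_nonneg divide_nonneg_pos mult_nonneg_nonneg) auto
    thus ?thesis by linarith
  qed
  have bd: "\<bar>1 / cosh t\<bar> \<le> 1 * cosh t ^ 2" for t :: real
  proof -
    have "\<bar>1 / cosh t\<bar> \<le> 1" using cosh_real_ge_1[of t] by simp
    also have "1 \<le> cosh t ^ 2" by (rule one_le_power[OF cosh_real_ge_1])
    finally show ?thesis by simp
  qed
  note r = radial_integral[OF b c1 c2 der neg bd]
  have eq3: "(\<lambda>q. exp (- \<beta> * q0 q) / q0 q) = (\<lambda>q. 1 / cosh (arsinh (norm q)) * cosh_weight \<beta> (arsinh (norm q)))"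
    by (auto simp: cosh_weight_def q0_eq_cosh_arsinh)
  show "integrable lborel (\<lambda>q. exp (- \<beta> * q0 q) / q0 q)"
    unfolding eq3 by (rule r(1))
  have eq1: "(\<lambda>s. 1 / cosh s * sinh s ^ 2 * cosh s * cosh_weight \<beta> s) = (\<lambda>s. sinh s ^ 2 * cosh_weight \<beta> s)"
    by auto
  show "(LINT q|lborel. exp (- \<beta> * q0 q) / q0 q) = 3 * unit_ball_vol 3 * besselK 1 \<beta> / \<beta>"
    unfolding eq3 using r(2) unfolding eq1 half_line_integral_sinh2[OF b] by simp
qed

lemma integral_q0_plus_exp_q0:
  assumes b: "\<beta> > 0"
  shows "integrable lborel (\<lambda>q. (q0 q + 1/\<beta>) * exp (- \<beta> * q0 q))"
    and "(LINT q|lborel. (q0 q + 1/\<beta>) * exp (- \<beta> * q0 q)) = 3 * unit_ball_vol 3 * half_line_integral (\<lambda>s. (cosh s + 1/\<beta>) * sinh s ^ 2 * cosh s * cosh_weight \<beta> s)"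
proof -
  have der: "DERIV (\<lambda>t. (cosh t + 1/\<beta>) * cosh_weight \<beta> t) t :> (- (\<beta> * sinh t * cosh t)) * cosh_weight \<beta> t" for t
    unfolding cosh_weight_def using b by (auto intro!: derivative_eq_intros simp: field_simps power2_eq_square)
  have c1: "continuous_on UNIV (\<lambda>t::real. cosh t + 1/\<beta>)" by (intro continuous_intros)
  have c2: "continuous_on UNIV (\<lambda>t::real. - (\<beta> * sinh t * cosh t))" by (intro continuous_intros)
  have neg: "- (\<beta> * sinh t * cosh t) \<le> 0" if "t \<ge> 0" for t
    using that b by auto
  have bd: "\<bar>cosh t + 1/\<beta>\<bar> \<le> (1 + 1/\<beta>) * cosh t ^ 2" for t :: real
  proof -
    have c: "1 \<le> cosh t" "cosh t \<le> cosh t ^ 2" "1 \<le> cosh t ^ 2" using cosh_real_ge_1[of t] one_le_power[OF cosh_real_ge_1, of t 2]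
      by (auto simp: power2_eq_square)
    have "\<bar>cosh t + 1/\<beta>\<bar> = cosh t + 1/\<beta>" using b c by simp
    also have "\<dots> \<le> cosh t ^ 2 + 1/\<beta> * cosh t ^ 2" using c b
      by (intro add_mono) (auto simp: divide_right_mono)
    finally show ?thesis by (simp add: algebra_simps)
  qed
  note r = radial_integral[OF b c1 c2 der neg bd]
  have eq3: "(\<lambda>q. (q0 q + 1/\<beta>) * exp (- \<beta> * q0 q)) = (\<lambda>q. (cosh (arsinh (norm q)) + 1/\<beta>) * cosh_weight \<beta> (arsinh (norm q)))"
    by (auto simp: cosh_weight_def q0_eq_cosh_arsinh)
  show "integrable lborel (\<lambda>q. (q0 q + 1/\<beta>) * exp (- \<beta> * q0 q))"
    unfolding eq3 by (rule r(1))
  show "(LINT q|lborel. (q0 q + 1/\<beta>) * exp (- \<beta> * q0 q)) = 3 * unit_ball_vol 3 * half_line_integral (\<lambda>s. (cosh s + 1/\<beta>) * sinh s ^ 2 * cosh s * cosh_weight \<beta> s)"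
    unfolding eq3 using r(2) by simp
qed

lemma integral_q0_exp_q0:
  assumes b: "\<beta> > 0"
  shows "integrable lborel (\<lambda>q. q0 q * exp (- \<beta> * q0 q))"
    and "(LINT q|lborel. q0 q * exp (- \<beta> * q0 q)) = 3 * unit_ball_vol 3 * (besselK 1 \<beta> / \<beta> + 3 * besselK 2 \<beta> / \<beta>^2)"
proof -
  have eq: "(\<lambda>q. q0 q * exp (- \<beta> * q0 q)) = (\<lambda>q. (q0 q + 1/\<beta>) * exp (- \<beta> * q0 q) - (1/\<beta>) * exp (- \<beta> * q0 q))"
    by (auto simp: algebra_simps)
  show "integrable lborel (\<lambda>q. q0 q * exp (- \<beta> * q0 q))"
    unfolding eq using integral_q0_plus_exp_q0(1)[OF b] integral_exp_q0(1)[OF b] by auto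
  have "(LINT q|lborel. q0 q * exp (- \<beta> * q0 q)) = 
      (LINT q|lborel. (q0 q + 1/\<beta>) * exp (- \<beta> * q0 q)) - (1/\<beta>) * (LINT q|lborel. exp (- \<beta> * q0 q))"
    unfolding eq using integral_q0_plus_exp_q0(1)[OF b] integral_exp_q0(1)[OF b] by simp
  also have "\<dots> = 3 * unit_ball_vol 3 * (besselK 1 \<beta> / \<beta> + 3 * besselK 2 \<beta> / \<beta>^2)"
    unfolding integral_q0_plus_exp_q0(2)[OF b] integral_exp_q0(2)[OF b] half_line_integral_energy[OF b] by (simp add: algebra_simps)
  finally show "(LINT q|lborel. q0 q * exp (- \<beta> * q0 q)) = 3 * unit_ball_vol 3 * (besselK 1 \<beta> / \<beta> + 3 * besselK 2 \<beta> / \<beta>^2)" .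
qed

lemma integrable_q0_poly_exp_q0:
  assumes b: "\<beta> > 0"
  shows "integrable lborel (\<lambda>q. (q0 q ^ 2 + 2 * q0 q/\<beta> + 2/\<beta>^2) * exp (- \<beta> * q0 q))"
proof -
  have der: "DERIV (\<lambda>t. (cosh t ^ 2 + 2 * cosh t/\<beta> + 2/\<beta>^2) * cosh_weight \<beta> t) t :> (- (\<beta> * sinh t * cosh t ^ 2)) * cosh_weight \<beta> t" for t
    unfolding cosh_weight_def using b by (auto intro!: derivative_eq_intros simp: field_simps power2_eq_square)
  have c1: "continuous_on UNIV (\<lambda>t::real. cosh t ^ 2 + 2 * cosh t/\<beta> + 2/\<beta>^2)" using b by (intro continuous_intros) auto
  have c2: "continuous_on UNIV (\<lambda>t::real. - (\<beta> * sinh t * cosh t ^ 2))" by (intro continuous_intros)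
  have neg: "- (\<beta> * sinh t * cosh t ^ 2) \<le> 0" if "t \<ge> 0" for t
    using that b by auto
  have bd: "\<bar>cosh t ^ 2 + 2 * cosh t/\<beta> + 2/\<beta>^2\<bar> \<le> (1 + 2/\<beta> + 2/\<beta>^2) * cosh t ^ 2" for t :: real
  proof -
    have c: "1 \<le> cosh t" "cosh t \<le> cosh t ^ 2" "1 \<le> cosh t ^ 2" using cosh_real_ge_1[of t] one_le_power[OF cosh_real_ge_1, of t 2]
      by (auto simp: power2_eq_square)
    have "\<bar>cosh t ^ 2 + 2 * cosh t/\<beta> + 2/\<beta>^2\<bar> = cosh t ^ 2 + 2 * cosh t/\<beta> + 2/\<beta>^2" using b c by simp
    also have "\<dots> \<le> cosh t ^ 2 + 2/\<beta> * cosh t ^ 2 + 2/\<beta>^2 * cosh t ^ 2" using c b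
      by (intro add_mono) (auto simp: divide_right_mono)
    finally show ?thesis by (simp add: algebra_simps)
  qed
  note r = radial_integral[OF b c1 c2 der neg bd]
  have eq3: "(\<lambda>q. (q0 q ^ 2 + 2 * q0 q/\<beta> + 2/\<beta>^2) * exp (- \<beta> * q0 q)) = (\<lambda>q. (cosh (arsinh (norm q)) ^ 2 + 2 * cosh (arsinh (norm q))/\<beta> + 2/\<beta>^2) * cosh_weight \<beta> (arsinh (norm q)))"
    by (auto simp: cosh_weight_def q0_eq_cosh_arsinh)
  show ?thesis
    unfolding eq3 by (rule r(1))
qed

lemma integrable_q0_sq_exp_q0:
  assumes b: "\<beta> > 0"
  shows "integrable lborel (\<lambda>q. q0 q ^ 2 * exp (- \<beta> * q0 q))"
proof (rule Bochner_Integration.integrable_bound[OF integrable_q0_poly_exp_q0[OF b]])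
  show "(\<lambda>q. q0 q ^ 2 * exp (- \<beta> * q0 q)) \<in> borel_measurable lborel"
    by (simp, intro borel_measurable_continuous_onI continuous_intros)
  show "AE x in lborel. norm (q0 x ^ 2 * exp (- \<beta> * q0 x)) \<le> norm ((q0 x ^ 2 + 2 * q0 x / \<beta> + 2 / \<beta>^2) * exp (- \<beta> * q0 x))"
  proof (rule AE_I2)
    fix x
    have "0 \<le> 2 * q0 x / \<beta> + 2 / \<beta>^2" using b q0_pos[of x] by simp
    thus "norm (q0 x ^ 2 * exp (- \<beta> * q0 x)) \<le> norm ((q0 x ^ 2 + 2 * q0 x / \<beta> + 2 / \<beta>^2) * exp (- \<beta> * q0 x))"
      by (simp add: abs_mult)
  qed
qed

lemma integrable_dominated_q0_sq_exp:
  fixes g :: "mom \<Rightarrow> real"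
  assumes b: "\<beta> > 0" and g: "continuous_on UNIV g"
    and bd: "\<And>q. \<bar>g q\<bar> \<le> c * (q0 q ^ 2 * exp (- \<beta> * q0 q))"
  shows "integrable lborel g"
proof (rule Bochner_Integration.integrable_bound[OF integrable_mult_right[OF integrable_q0_sq_exp_q0[OF b], of c]])
  show "g \<in> borel_measurable lborel" using g by (simp add: borel_measurable_continuous_onI)
  show "AE x in lborel. norm (g x) \<le> norm (c * (q0 x ^ 2 * exp (- \<beta> * q0 x)))"
    using bd by (auto intro!: AE_I2 order.trans[OF _ abs_ge_self])
qed

lemma integral_lincomb3:
  fixes f1 f2 f3 :: "mom \<Rightarrow> real"
  assumes "integrable lborel f1" "integrable lborel f2" "integrable lborel f3"
  shows "(LINT q|lborel. a * f1 q + b * f2 q + f3 q) = a * (LINT q|lborel. f1 q) + b * (LINT q|lborel. f2 q) + (LINT q|lborel. f3 q)"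
  using assms by simp

lemma integral_pos_if_continuous:
  fixes f :: "'a::euclidean_space \<Rightarrow> real"
  assumes i: "integrable lborel f" and c: "continuous_on UNIV f"
    and nn: "\<And>x. f x \<ge> 0" and p: "f x0 > 0"
  shows "(LINT x|lborel. f x) > 0"
proof -
  have nnae: "AE x in lborel. 0 \<le> f x" using nn by simp
  have ge: "(LINT x|lborel. f x) \<ge> 0" by (rule integral_nonneg_AE[OF nnae])
  have "(LINT x|lborel. f x) \<noteq> 0"
  proof
    assume "(LINT x|lborel. f x) = 0"
    hence ae: "AE x in lborel. f x = 0" using integral_nonneg_eq_0_iff_AE[OF i nnae] by simp
    define S where "S = {x. f x \<noteq> 0}"
    have oS: "open S" unfolding S_def by (rule open_Collect_neq[OF c continuous_on_const])
    hence "S \<in> sets lborel" by simp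
    hence "emeasure lborel S = 0" using ae AE_iff_measurable[of S lborel "\<lambda>x. f x = 0"] by (simp add: S_def)
    moreover have "x0 \<in> S" using p by (simp add: S_def)
    then obtain e where e: "e > 0" "ball x0 e \<subseteq> S" using oS open_contains_ball by blast
    have "emeasure lborel (ball x0 e) \<le> emeasure lborel S" by (rule emeasure_mono[OF e(2)]) (simp add: oS)
    moreover have "emeasure lborel (ball x0 e) > 0"
      using e(1) by (simp add: emeasure_ball)
    ultimately show False by simp
  qed
  with ge show ?thesis by simp
qed

lemma Mnorm_eq_besselK2:
  assumes b: "\<beta> > 0"
  shows "Mnorm \<beta> = 3 * unit_ball_vol 3 * besselK 2 \<beta> / \<beta>"
  unfolding Mnorm_def using integral_exp_q0(2)[OF b] by simp

lemma Mnorm_pos: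
  assumes b: "\<beta> > 0"
  shows "Mnorm \<beta> > 0"
  unfolding Mnorm_def by (rule integral_pos_if_continuous[OF integral_exp_q0(1)[OF b], of 0]) (auto intro!: continuous_intros)

lemma besselK2_pos:
  assumes b: "\<beta> > 0"
  shows "besselK 2 \<beta> > 0"
proof -
  have "besselK 2 \<beta> = Mnorm \<beta> * \<beta> / (3 * unit_ball_vol 3)" using Mnorm_eq_besselK2[OF b] unit_ball_vol_pos[of 3, THEN less_imp_neq, THEN not_sym] b by (simp add: field_simps)
  thus ?thesis using Mnorm_pos[OF b] unit_ball_vol_pos[of 3, THEN less_imp_neq, THEN not_sym] b by simp
qed

section \<open>Coordinate symmetries of Lebesgue measure\<close>

lemma Basis_cart_range: "(Basis :: (real^'n) set) = range (\<lambda>k. axis k 1)"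
  by (auto simp: Basis_vec_def)

lemma prod_Basis_cart: "(\<Prod>b\<in>(Basis :: (real^'n) set). f b) = (\<Prod>k\<in>UNIV. f (axis k 1))"
proof -
  have "inj (\<lambda>k::'n. axis k (1::real))" by (auto simp: inj_def axis_eq_axis)
  thus ?thesis unfolding Basis_cart_range by (simp add: prod.reindex)
qed

lemma distr_lborel_signed_perm:
  fixes \<pi> :: "'n::finite \<Rightarrow> 'n" and s :: "'n \<Rightarrow> real"
  assumes bij: "bij \<pi>" and s: "\<And>k. s k = 1 \<or> s k = -1"
  shows "distr lborel borel (\<lambda>x::real^'n. \<chi> k. s k * x $ \<pi> k) = lborel"
proof (rule lborel_eqI[symmetric])
  define T where "T = (\<lambda>x::real^'n. \<chi> k. s k * x $ \<pi> k)"
  have Tm: "T \<in> borel_measurable borel" unfolding T_def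
    by (intro borel_measurable_continuous_onI continuous_on_vec_lambda continuous_intros)
  define \<rho> where "\<rho> = inv \<pi>"
  have pr: "\<pi> (\<rho> j) = j" for j unfolding \<rho>_def by (rule surj_f_inv_f[OF bij_is_surj[OF bij]])
  have rp: "\<rho> (\<pi> k) = k" for k unfolding \<rho>_def by (rule inv_f_f[OF bij_is_inj[OF bij]])
  fix l u :: "real^'n"
  assume le: "\<And>b. b \<in> Basis \<Longrightarrow> l \<bullet> b \<le> u \<bullet> b"
  hence le': "l $ k \<le> u $ k" for k using le[of "axis k 1"] by (simp add: inner_axis)
  define l' where "l' = (\<chi> j. if s (\<rho> j) = 1 then l $ \<rho> j else - u $ \<rho> j)"
  define u' where "u' = (\<chi> j. if s (\<rho> j) = 1 then u $ \<rho> j else - l $ \<rho> j)"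
  have pre: "T -` box l u = box l' u'"
  proof (intro set_eqI iffI)
    fix x assume "x \<in> T -` box l u"
    hence h: "l $ k < s k * x $ \<pi> k \<and> s k * x $ \<pi> k < u $ k" for k
      by (auto simp: T_def mem_box_cart)
    show "x \<in> box l' u'" unfolding mem_box_cart
    proof
      fix j
      show "l' $ j < x $ j \<and> x $ j < u' $ j"
        using h[of "\<rho> j"] s[of "\<rho> j"] by (auto simp: l'_def u'_def pr)
    qed
  next
    fix x assume "x \<in> box l' u'"
    hence h: "l' $ j < x $ j \<and> x $ j < u' $ j" for j by (auto simp: mem_box_cart)
    show "x \<in> T -` box l u" unfolding mem_box_cart vimage_eq
    proof
      fix k
      show "l $ k < T x $ k \<and> T x $ k < u $ k"
        using h[of "\<pi> k"] s[of k] by (auto simp: l'_def u'_def rp T_def)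
    qed
  qed
  have "emeasure (distr lborel borel T) (box l u) = emeasure lborel (box l' u')"
    using Tm by (simp add: emeasure_distr pre)
  also have "\<dots> = (\<Prod>b\<in>Basis. (u' - l') \<bullet> b)"
  proof -
    have "l' $ j \<le> u' $ j" for j using le'[of "\<rho> j"] s[of "\<rho> j"] by (auto simp: l'_def u'_def)
    thus ?thesis by (subst emeasure_lborel_box_eq) (auto simp: Basis_cart_range inner_axis)
  qed
  also have "(\<Prod>b\<in>Basis. (u' - l') \<bullet> b) = (\<Prod>j\<in>UNIV. u $ \<rho> j - l $ \<rho> j)"
    unfolding prod_Basis_cart using s by (intro prod.cong refl) (force simp: inner_axis l'_def u'_def)
  also have "\<dots> = (\<Prod>k\<in>UNIV. u $ k - l $ k)"
    by (rule prod.reindex_bij_witness[where i=\<pi> and j=\<rho>]) (auto simp: pr rp)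
  also have "\<dots> = (\<Prod>b\<in>Basis. (u - l) \<bullet> b)"
    unfolding prod_Basis_cart by (simp add: inner_axis)
  finally show "emeasure (distr lborel borel (\<lambda>x::real^'n. \<chi> k. s k * x $ \<pi> k)) (box l u) = (\<Prod>b\<in>Basis. (u - l) \<bullet> b)"
    unfolding T_def .
qed simp

lemma integral_signed_perm:
  fixes \<pi> :: "'n::finite \<Rightarrow> 'n" and s :: "'n \<Rightarrow> real" and f :: "real^'n \<Rightarrow> real"
  assumes bij: "bij \<pi>" and s: "\<And>k. s k = 1 \<or> s k = -1" and f: "f \<in> borel_measurable borel"
  shows "(LINT x|lborel. f (\<chi> k. s k * x $ \<pi> k)) = (LINT x|lborel. f x)"
proof -
  define T where "T = (\<lambda>x::real^'n. \<chi> k. s k * x $ \<pi> k)"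
  have Tm: "T \<in> borel \<rightarrow>\<^sub>M borel" unfolding T_def
    by (intro borel_measurable_continuous_onI continuous_on_vec_lambda continuous_intros)
  have "(LINT x|lborel. f x) = integral\<^sup>L (distr lborel borel T) f"
    unfolding T_def using distr_lborel_signed_perm[OF bij s] by simp
  also have "\<dots> = (LINT x|lborel. f (T x))"
    using integral_distr[of T lborel borel f] Tm f by (simp add: comp_def)
  finally show ?thesis unfolding T_def ..
qed

lemma norm_signed_perm:
  fixes \<pi> :: "'n::finite \<Rightarrow> 'n" and s :: "'n \<Rightarrow> real"
  assumes bij: "bij \<pi>" and s: "\<And>k. s k = 1 \<or> s k = -1"
  shows "norm (\<chi> k. s k * x $ \<pi> k) = norm (x :: real^'n)"
proof -
  have "(\<Sum>k\<in>UNIV. (s k * x $ \<pi> k) * (s k * x $ \<pi> k)) = (\<Sum>k\<in>UNIV. x $ \<pi> k * x $ \<pi> k)"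
  proof (intro sum.cong refl)
    fix k
    show "(s k * x $ \<pi> k) * (s k * x $ \<pi> k) = x $ \<pi> k * x $ \<pi> k"
      by (cases "s k = 1") (use s[of k] in auto)
  qed
  also have "\<dots> = (\<Sum>j\<in>UNIV. x $ j * x $ j)"
    by (rule sum.reindex_bij_witness[where i="inv \<pi>" and j=\<pi>])
      (simp_all add: surj_f_inv_f[OF bij_is_surj[OF bij]] inv_f_f[OF bij_is_inj[OF bij]])
  finally show ?thesis by (simp add: norm_eq_sqrt_inner inner_vec_def)
qed

definition reflect :: "3 \<Rightarrow> mom \<Rightarrow> mom" where
  "reflect i x = (\<chi> k. (if k = i then -1 else 1) * x $ id k)"

definition swap_index :: "3 \<Rightarrow> 3 \<Rightarrow> 3 \<Rightarrow> 3" where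
  "swap_index i j k = (if k = i then j else if k = j then i else k)"

definition swap_coords :: "3 \<Rightarrow> 3 \<Rightarrow> mom \<Rightarrow> mom" where
  "swap_coords i j x = (\<chi> k. 1 * x $ swap_index i j k)"

lemma bij_swap_index: "bij (swap_index i j)"
  by (rule o_bij[of "swap_index i j"]) (auto simp: swap_index_def fun_eq_iff)

lemma norm_reflect [simp]: "norm (reflect i x) = norm x"
  unfolding reflect_def by (rule norm_signed_perm) (auto simp: bij_id[unfolded id_def])

lemma norm_swap_coords [simp]: "norm (swap_coords i j x) = norm x"
  unfolding swap_coords_def by (rule norm_signed_perm[OF bij_swap_index]) auto

lemma q0_reflect [simp]: "q0 (reflect i x) = q0 x" by (simp add: q0_def)

lemma q0_swap_coords [simp]: "q0 (swap_coords i j x) = q0 x" by (simp add: q0_def)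

lemma reflect_nth: "reflect i x $ k = (if k = i then - x $ k else x $ k)"
  by (simp add: reflect_def)

lemma swap_coords_nth: "swap_coords i j x $ k = x $ swap_index i j k"
  by (simp add: swap_coords_def)

lemma inner_reflect: "c \<bullet> reflect i q = c \<bullet> q - 2 * (c $ i * q $ i)"
proof -
  have "c \<bullet> reflect i q = (\<Sum>k\<in>UNIV. c $ k * q $ k - (if k = i then 2 * (c $ k * q $ k) else 0))"
    unfolding inner_vec_def by (intro sum.cong refl) (simp add: reflect_nth)
  also have "\<dots> = c \<bullet> q - 2 * (c $ i * q $ i)"
    by (simp add: sum_subtractf inner_vec_def)
  finally show ?thesis .
qed

lemma integral_reflect:
  fixes f :: "mom \<Rightarrow> real"
  assumes "f \<in> borel_measurable borel"
  shows "(LINT x|lborel. f (reflect i x)) = (LINT x|lborel. f x)"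
  unfolding reflect_def by (rule integral_signed_perm[OF _ _ assms]) (auto simp: bij_id[unfolded id_def])

lemma integral_swap_coords:
  fixes f :: "mom \<Rightarrow> real"
  assumes "f \<in> borel_measurable borel"
  shows "(LINT x|lborel. f (swap_coords i j x)) = (LINT x|lborel. f x)"
  unfolding swap_coords_def by (rule integral_signed_perm[OF bij_swap_index _ assms]) auto

lemma integral_eq_0_if_odd_reflect:
  fixes f :: "mom \<Rightarrow> real"
  assumes m: "f \<in> borel_measurable borel" and odd: "\<And>x. f (reflect i x) = - f x"
  shows "(LINT x|lborel. f x) = 0"
proof -
  have "(LINT x|lborel. f x) = (LINT x|lborel. f (reflect i x))" using integral_reflect[OF m] by simp
  also have "\<dots> = - (LINT x|lborel. f x)" by (simp add: odd)
  finally show ?thesis by linarith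
qed

lemma integral_uminus_vec:
  fixes f :: "real^'n \<Rightarrow> real"
  assumes "f \<in> borel_measurable borel"
  shows "(LINT x|lborel. f (- x)) = (LINT x|lborel. f x)"
proof -
  have "(\<lambda>x::real^'n. \<chi> k. (-1) * x $ id k) = uminus" by (auto simp: fun_eq_iff vec_eq_iff)
  hence "(LINT x|lborel. f (- x)) = (LINT x|lborel. f (\<chi> k. (-1) * x $ id k))" by (simp add: fun_eq_iff)
  also have "\<dots> = (LINT x|lborel. f x)"
    by (rule integral_signed_perm[OF _ _ assms]) (auto simp: bij_id[unfolded id_def])
  finally show ?thesis .
qed

lemma integral_eq_0_if_odd:
  fixes f :: "real^'n \<Rightarrow> real"
  assumes m: "f \<in> borel_measurable borel" and odd: "\<And>x. f (- x) = - f x"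
  shows "(LINT x|lborel. f x) = 0"
  using integral_uminus_vec[OF m] odd by simp

section \<open>Moments of the Juettner distribution J0\<close>

lemma integral_inner_exp_q0_div_q0:
  "(LINT q|lborel. (c \<bullet> q) * exp (- \<beta> * q0 q) / q0 q) = 0"
  by (rule integral_eq_0_if_odd) (auto intro!: borel_measurable_continuous_onI continuous_intros simp: inner_minus_right q0_pos[THEN less_imp_neq, symmetric])

lemma integral_inner_exp_q0:
  "(LINT q|lborel. (c \<bullet> q) * exp (- \<beta> * q0 q)) = 0"
  by (rule integral_eq_0_if_odd) (auto intro!: borel_measurable_continuous_onI continuous_intros simp: inner_minus_right q0_pos[THEN less_imp_neq, symmetric])

lemma integrable_component_sq_exp_q0_div_q0:
  assumes b: "\<beta> > 0"
  shows "integrable lborel (\<lambda>q. (q $ i)^2 * exp (- \<beta> * q0 q) / q0 q)"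
proof (rule integrable_dominated_q0_sq_exp[OF b, where c=1])
  show "continuous_on UNIV (\<lambda>q. (q $ i)^2 * exp (- \<beta> * q0 q) / q0 q)"
    by (intro continuous_intros) (simp add: q0_pos[THEN less_imp_neq, symmetric])
  fix q :: mom
  have "\<bar>q $ i\<bar>^2 \<le> q0 q ^ 2" by (rule power_mono[OF abs_component_le_q0]) simp
  hence h: "(q $ i)^2 \<le> q0 q ^ 2" by simp
  have "\<bar>(q $ i)^2 * exp (- \<beta> * q0 q) / q0 q\<bar> = (q $ i)^2 * exp (- \<beta> * q0 q) / q0 q"
    using q0_pos[of q] by simp
  also have "\<dots> \<le> q0 q ^ 2 * exp (- \<beta> * q0 q) / q0 q"
    using h q0_pos[of q] by (intro divide_right_mono mult_right_mono) auto
  also have "\<dots> = q0 q * exp (- \<beta> * q0 q)" using q0_pos[of q] by (simp add: power2_eq_square)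
  also have "\<dots> \<le> q0 q ^ 2 * exp (- \<beta> * q0 q)" by (intro mult_right_mono q0_le_q0_sq) auto
  finally show "\<bar>(q $ i)^2 * exp (- \<beta> * q0 q) / q0 q\<bar> \<le> 1 * (q0 q ^ 2 * exp (- \<beta> * q0 q))" by simp
qed

lemma integral_component_sq_exp_q0_div_q0:
  assumes b: "\<beta> > 0"
  shows "(LINT q|lborel. (q $ i)^2 * exp (- \<beta> * q0 q) / q0 q) = 3 * unit_ball_vol 3 * besselK 2 \<beta> / \<beta>^2"
proof -
  \<comment> \<open>The three diagonal moments agree by symmetry, and their sum is the integral of
    (q0^2 - 1) exp(-beta q0) / q0.\<close>
  define X where "X = (\<lambda>i. (LINT q|lborel. (q $ i)^2 * exp (- \<beta> * q0 q) / q0 q))"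
  have swap: "X j = X i" for i j
  proof -
    let ?f = "\<lambda>q::mom. (q $ i)^2 * exp (- \<beta> * q0 q) / q0 q"
    have m: "?f \<in> borel_measurable borel"
      by (intro borel_measurable_continuous_onI continuous_intros) (simp add: q0_pos[THEN less_imp_neq, symmetric])
    have "X i = (LINT q|lborel. ?f (swap_coords i j q))" unfolding X_def using integral_swap_coords[OF m] by simp
    also have "\<dots> = X j" unfolding X_def by (simp add: swap_coords_nth swap_index_def)
    finally show ?thesis by simp
  qed
  have "(\<Sum>i\<in>UNIV. X i) = (LINT q|lborel. (\<Sum>i\<in>UNIV. (q $ i)^2 * exp (- \<beta> * q0 q) / q0 q))"
    unfolding X_def by (rule Bochner_Integration.integral_sum[symmetric]) (rule integrable_component_sq_exp_q0_div_q0[OF b])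
  also have "\<dots> = (LINT q|lborel. q0 q * exp (- \<beta> * q0 q) - exp (- \<beta> * q0 q) / q0 q)"
  proof (intro Bochner_Integration.integral_cong refl)
    fix q :: mom
    have "(\<Sum>i\<in>UNIV. (q $ i)^2) = (norm q)^2"
      by (simp only: power2_norm_eq_inner) (simp add: inner_vec_def power2_eq_square)
    hence "(\<Sum>i\<in>UNIV. (q $ i)^2) = q0 q ^ 2 - 1" by (simp add: q0_sq_eq)
    hence "(\<Sum>i\<in>UNIV. (q $ i)^2 * exp (- \<beta> * q0 q) / q0 q) = (q0 q ^ 2 - 1) * exp (- \<beta> * q0 q) / q0 q"
      by (simp add: sum_divide_distrib[symmetric] sum_distrib_right[symmetric])
    also have "\<dots> = q0 q * exp (- \<beta> * q0 q) - exp (- \<beta> * q0 q) / q0 q"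
      using q0_pos[of q] by (simp add: field_simps power2_eq_square)
    finally show "(\<Sum>i\<in>UNIV. (q $ i)^2 * exp (- \<beta> * q0 q) / q0 q) = q0 q * exp (- \<beta> * q0 q) - exp (- \<beta> * q0 q) / q0 q" .
  qed
  also have "\<dots> = 3 * unit_ball_vol 3 * (besselK 1 \<beta> / \<beta> + 3 * besselK 2 \<beta> / \<beta>^2) - 3 * unit_ball_vol 3 * besselK 1 \<beta> / \<beta>"
    using integral_q0_exp_q0[OF b] integral_exp_q0_div_q0[OF b] by simp
  finally have "(\<Sum>i\<in>UNIV. X i) = 9 * unit_ball_vol 3 * besselK 2 \<beta> / \<beta>^2" by (simp add: algebra_simps)
  moreover have "(\<Sum>i\<in>UNIV. X i) = 3 * X i" unfolding sum_3 using swap[of 1 i] swap[of 2 i] swap[of 3 i] by simp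
  ultimately show ?thesis unfolding X_def by simp
qed

lemma integral_component_inner_exp_q0_div_q0:
  assumes b: "\<beta> > 0"
  shows "(LINT q|lborel. q $ i * (c \<bullet> q) * exp (- \<beta> * q0 q) / q0 q) = c $ i * (3 * unit_ball_vol 3 * besselK 2 \<beta> / \<beta>^2)"
proof -
  \<comment> \<open>The off-diagonal part r is odd under reflection of the i-th coordinate.\<close>
  define r where "r = (\<lambda>q::mom. q $ i * (c \<bullet> q - c $ i * q $ i) * exp (- \<beta> * q0 q) / q0 q)"
  have nz: "\<And>q. q0 q \<noteq> 0" using q0_pos by (simp add: less_imp_neq[symmetric])
  have eq: "(\<lambda>q. q $ i * (c \<bullet> q) * exp (- \<beta> * q0 q) / q0 q)
      = (\<lambda>q. c $ i * ((q $ i)^2 * exp (- \<beta> * q0 q) / q0 q) + r q)"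
    by (auto simp: r_def field_simps power2_eq_square nz)
  have ir: "integrable lborel r"
  proof (rule integrable_dominated_q0_sq_exp[OF b, where c="2 * norm c"])
    show "continuous_on UNIV r" unfolding r_def by (intro continuous_intros) (simp add: nz)
    fix q :: mom
    have e0: "exp (- \<beta> * q0 q) / q0 q \<ge> 0" using q0_pos[of q] by simp
    have "\<bar>c \<bullet> q - c $ i * q $ i\<bar> \<le> norm c * q0 q + norm c * q0 q"
    proof -
      have "\<bar>c $ i * q $ i\<bar> \<le> norm c * q0 q"
        unfolding abs_mult by (intro mult_mono abs_component_le_norm abs_component_le_q0) auto
      thus ?thesis using abs_inner_le_q0[of c q] by linarith
    qed
    hence h: "\<bar>q $ i * (c \<bullet> q - c $ i * q $ i)\<bar> \<le> q0 q * (2 * norm c * q0 q)"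
      unfolding abs_mult by (intro mult_mono abs_component_le_q0) (auto simp: mult_ac less_imp_le[OF q0_pos])
    have "\<bar>r q\<bar> = \<bar>q $ i * (c \<bullet> q - c $ i * q $ i)\<bar> * (exp (- \<beta> * q0 q) / q0 q)"
      unfolding r_def using e0 q0_pos[of q] by (simp add: abs_mult)
    also have "\<dots> \<le> q0 q * (2 * norm c * q0 q) * (exp (- \<beta> * q0 q) / q0 q)"
      by (rule mult_right_mono[OF h e0])
    also have "\<dots> = 2 * norm c * (q0 q * exp (- \<beta> * q0 q))" using nz[of q] by (simp add: field_simps)
    also have "\<dots> \<le> 2 * norm c * (q0 q ^ 2 * exp (- \<beta> * q0 q))"
      by (intro mult_left_mono mult_right_mono q0_le_q0_sq) auto
    finally show "\<bar>r q\<bar> \<le> 2 * norm c * (q0 q ^ 2 * exp (- \<beta> * q0 q))" .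
  qed
  have r0: "(LINT q|lborel. r q) = 0"
  proof (rule integral_eq_0_if_odd_reflect[of _ i])
    show "r \<in> borel_measurable borel" unfolding r_def
      by (intro borel_measurable_continuous_onI continuous_intros) (simp add: nz)
    fix x
    show "r (reflect i x) = - r x" unfolding r_def by (simp add: reflect_nth inner_reflect algebra_simps diff_divide_distrib)
  qed
  define F where "F = (\<lambda>q::mom. (q $ i)^2 * exp (- \<beta> * q0 q) / q0 q)"
  have iF: "integrable lborel F" unfolding F_def by (rule integrable_component_sq_exp_q0_div_q0[OF b])
  have "(LINT q|lborel. c $ i * F q + r q) = (LINT q|lborel. c $ i * F q) + (LINT q|lborel. r q)"
    by (rule Bochner_Integration.integral_add) (use iF ir in auto)
  also have "(LINT q|lborel. c $ i * F q) = c $ i * (LINT q|lborel. F q)" by simp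
  finally have "(LINT q|lborel. c $ i * F q + r q) = c $ i * (LINT q|lborel. F q)" using r0 by simp
  thus ?thesis unfolding eq using integral_component_sq_exp_q0_div_q0[OF b, of i] unfolding F_def by simp
qed

lemma J0_pos: "\<beta> > 0 \<Longrightarrow> J0 \<beta> q > 0"
  using Mnorm_pos[of \<beta>] by (simp add: J0_def)

lemma abs_J0 [simp]: "\<beta> > 0 \<Longrightarrow> \<bar>J0 \<beta> q\<bar> = J0 \<beta> q" using J0_pos[of \<beta> q] by simp

lemma sqrt_J0_mult_self: "\<beta> > 0 \<Longrightarrow> sqrt (J0 \<beta> q) * sqrt (J0 \<beta> q) = J0 \<beta> q"
  using J0_pos[of \<beta> q] by simp

lemma continuous_on_J0 [continuous_intros]: "continuous_on A (J0 \<beta>)"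
  unfolding J0_def[abs_def] divide_inverse by (intro continuous_intros)

lemma integrable_mult_J0:
  fixes p :: "mom \<Rightarrow> real"
  assumes b: "\<beta> > 0" and p: "continuous_on UNIV p" and bd: "\<And>q. \<bar>p q\<bar> \<le> C * q0 q ^ 2"
  shows "integrable lborel (\<lambda>q. p q * J0 \<beta> q)"
proof (rule integrable_dominated_q0_sq_exp[OF b, where c="C / Mnorm \<beta>"])
  show "continuous_on UNIV (\<lambda>q. p q * J0 \<beta> q)" by (intro continuous_intros p)
  fix q
  have M: "Mnorm \<beta> > 0" by (rule Mnorm_pos[OF b])
  have "\<bar>p q * J0 \<beta> q\<bar> = \<bar>p q\<bar> * exp (- \<beta> * q0 q) / Mnorm \<beta>" using M by (simp add: J0_def abs_mult)
  also have "\<dots> \<le> C * q0 q ^ 2 * exp (- \<beta> * q0 q) / Mnorm \<beta>"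
    using M bd[of q] by (intro divide_right_mono mult_right_mono) auto
  finally show "\<bar>p q * J0 \<beta> q\<bar> \<le> C / Mnorm \<beta> * (q0 q ^ 2 * exp (- \<beta> * q0 q))" by simp
qed

lemma integral_mult_J0:
  fixes p :: "mom \<Rightarrow> real"
  shows "(LINT q|lborel. p q * J0 \<beta> q) = (LINT q|lborel. p q * exp (- \<beta> * q0 q)) / Mnorm \<beta>"
  unfolding J0_def by (simp flip: integral_divide_zero)

lemma integral_J0_div_q0:
  assumes b: "\<beta> > 0"
  shows "(LINT q|lborel. (1 / q0 q) * J0 \<beta> q) = alpha0 \<beta>"
proof -
  have "(LINT q|lborel. (1 / q0 q) * J0 \<beta> q) = (LINT q|lborel. exp (- \<beta> * q0 q) / q0 q) / Mnorm \<beta>"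
    unfolding integral_mult_J0 by simp
  also have "\<dots> = alpha0 \<beta>"
    unfolding integral_exp_q0_div_q0(2)[OF b] Mnorm_eq_besselK2[OF b] using unit_ball_vol_pos[of 3, THEN less_imp_neq, THEN not_sym] besselK2_pos[OF b] b by (simp add: alpha0_def field_simps)
  finally show ?thesis .
qed

lemma integral_J0:
  assumes b: "\<beta> > 0"
  shows "(LINT q|lborel. 1 * J0 \<beta> q) = 1"
  unfolding integral_mult_J0 using Mnorm_pos[OF b] by (simp add: Mnorm_def)

lemma integral_q0_J0:
  assumes b: "\<beta> > 0"
  shows "(LINT q|lborel. q0 q * J0 \<beta> q) = Psi \<beta>"
proof -
  have "(LINT q|lborel. q0 q * J0 \<beta> q) = (LINT q|lborel. q0 q * exp (- \<beta> * q0 q)) / Mnorm \<beta>"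
    unfolding integral_mult_J0 by simp
  also have "\<dots> = Psi \<beta>"
    unfolding integral_q0_exp_q0(2)[OF b] Mnorm_eq_besselK2[OF b] using unit_ball_vol_pos[of 3, THEN less_imp_neq, THEN not_sym] besselK2_pos[OF b] b by (simp add: Psi_def field_simps power2_eq_square)
  finally show ?thesis .
qed

lemma integral_inner_J0_div_q0: "(LINT q|lborel. ((c \<bullet> q) / q0 q) * J0 \<beta> q) = 0"
  unfolding integral_mult_J0 using integral_inner_exp_q0_div_q0[of c \<beta>] by (simp add: field_simps)

lemma integral_inner_J0: "(LINT q|lborel. (c \<bullet> q) * J0 \<beta> q) = 0"
  unfolding integral_mult_J0 using integral_inner_exp_q0[of c \<beta>] by (simp add: field_simps)

lemma integral_component_J0_div_q0: "(LINT q|lborel. (q $ i / q0 q) * J0 \<beta> q) = 0"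
  using integral_inner_J0_div_q0[of "axis i 1" \<beta>] by (simp add: inner_axis')

lemma integral_component_J0: "(LINT q|lborel. (q $ i) * J0 \<beta> q) = 0"
  using integral_inner_J0[of "axis i 1" \<beta>] by (simp add: inner_axis')

lemma integral_component_inner_J0_div_q0:
  assumes b: "\<beta> > 0"
  shows "(LINT q|lborel. (q $ i * (c \<bullet> q) / q0 q) * J0 \<beta> q) = c $ i / \<beta>"
proof -
  have "(LINT q|lborel. (q $ i * (c \<bullet> q) / q0 q) * J0 \<beta> q) = (LINT q|lborel. q $ i * (c \<bullet> q) * exp (- \<beta> * q0 q) / q0 q) / Mnorm \<beta>"
    unfolding integral_mult_J0 by (simp add: field_simps)
  also have "\<dots> = c $ i / \<beta>"
    unfolding integral_component_inner_exp_q0_div_q0[OF b, of i c] Mnorm_eq_besselK2[OF b] using unit_ball_vol_pos[of 3, THEN less_imp_neq, THEN not_sym] besselK2_pos[OF b] b by (simp add: field_simps power2_eq_square)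
  finally show ?thesis .
qed

lemma kappa0_eq: "kappa0 \<beta> = alpha0 \<beta> * Psi \<beta> - 1"
  by (simp add: kappa0_def Psi_def alpha0_def algebra_simps power2_eq_square)

lemma kappa0_pos:
  assumes b: "\<beta> > 0"
  shows "kappa0 \<beta> > 0"
proof -
  \<comment> \<open>With t = M/F, the integral of (q0 - t)^2 exp(-beta q0)/q0 equals Q - M^2/F, and it is
    positive because q0 is not constant; this is alpha0 Psi = F Q / M^2 > 1.\<close>
  define M where "M = (LINT q|lborel. exp (- \<beta> * q0 q))"
  define F where "F = (LINT q|lborel. exp (- \<beta> * q0 q) / q0 q)"
  define Q where "Q = (LINT q|lborel. q0 q * exp (- \<beta> * q0 q))"
  have M: "M = Mnorm \<beta>" unfolding M_def Mnorm_def ..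
  have Mp: "M > 0" using Mnorm_pos[OF b] M by simp
  have Fp: "F > 0" unfolding F_def by (rule integral_pos_if_continuous[OF integral_exp_q0_div_q0(1)[OF b], of 0]) (auto intro!: continuous_intros simp: q0_pos less_imp_le)
  have a: "alpha0 \<beta> = F / M"
    using integral_J0_div_q0[OF b] unfolding integral_mult_J0 M F_def by simp
  have p: "Psi \<beta> = Q / M"
    using integral_q0_J0[OF b] unfolding integral_mult_J0 M Q_def by simp
  define t where "t = M / F"
  define g where "g = (\<lambda>q. (q0 q - t)^2 * exp (- \<beta> * q0 q) / q0 q)"
  have eqg: "g = (\<lambda>q. (-2*t) * exp (- \<beta> * q0 q) + t^2 * (exp (- \<beta> * q0 q) / q0 q) + q0 q * exp (- \<beta> * q0 q))"
    by (auto simp: g_def fun_eq_iff field_simps power2_eq_square)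
  have "(LINT q|lborel. g q) = (-2*t) * M + t^2 * F + Q"
    unfolding eqg M_def F_def Q_def by (rule integral_lincomb3[OF integral_exp_q0(1)[OF b] integral_exp_q0_div_q0(1)[OF b] integral_q0_exp_q0(1)[OF b]])
  also have "\<dots> = Q - M^2/F" using Fp by (simp add: t_def field_simps power2_eq_square)
  finally have gi: "(LINT q|lborel. g q) = Q - M^2/F" .
  have "(LINT q|lborel. g q) > 0"
  proof (rule integral_pos_if_continuous)
    show "integrable lborel g" unfolding eqg
      by (intro Bochner_Integration.integrable_add integrable_mult_right integral_exp_q0(1)[OF b] integral_exp_q0_div_q0(1)[OF b] integral_q0_exp_q0(1)[OF b])
    show "continuous_on UNIV g" unfolding g_def by (intro continuous_intros) simp
    show "g x \<ge> 0" for x unfolding g_def using q0_pos[of x] by simp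
    show "g (if t = 1 then axis 1 1 else 0) > 0"
    proof (cases "t = 1")
      case True
      have "q0 (axis 1 1 :: mom) = sqrt 2" by (simp add: q0_def)
      hence "q0 (axis 1 1 :: mom) \<noteq> 1" by simp
      thus ?thesis using True unfolding g_def using q0_pos[of "axis 1 1 :: mom"] by simp
    next
      case False
      have "q0 (0::mom) = 1" by (simp add: q0_def)
      thus ?thesis using False unfolding g_def by simp
    qed
  qed
  hence "Q - M^2/F > 0" using gi by simp
  hence "Q * F > M^2" using Fp by (simp add: field_simps)
  hence "(F / M) * (Q / M) > 1" using Mp by (simp add: field_simps power2_eq_square)
  thus ?thesis unfolding kappa0_eq a p by simp
qed

lemma kappa0_nonzero: "\<beta> > 0 \<Longrightarrow> kappa0 \<beta> \<noteq> 0" using kappa0_pos[of \<beta>] by simp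

section \<open>The projection P\<close>

definition coll_inv :: "real \<Rightarrow> real \<Rightarrow> real \<Rightarrow> mom \<Rightarrow> mom \<Rightarrow> real" where
  "coll_inv \<beta> a b c q = (a + b * q0 q + c \<bullet> q) * sqrt (J0 \<beta> q)"

lemma abs_inv_q0_le: "\<bar>1 / q0 q\<bar> \<le> 1 * q0 q ^ 2"
proof -
  have "1 / q0 q \<le> 1" using q0_ge1[of q] by simp
  moreover have "1/q0 q \<ge> 0" using q0_pos[of q] by simp
  ultimately show ?thesis using one_le_q0_sq[of q] by simp
qed

lemma abs_one_le: "\<bar>1::real\<bar> \<le> 1 * q0 q ^ 2" using one_le_q0_sq[of q] by simp

lemma abs_q0_le: "\<bar>q0 q\<bar> \<le> 1 * q0 q ^ 2" using q0_le_q0_sq[of q] q0_pos[of q] by simp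

lemma abs_inner_div_q0_le: "\<bar>(c \<bullet> q) / q0 q\<bar> \<le> norm c * q0 q ^ 2"
proof -
  have "\<bar>(c \<bullet> q) / q0 q\<bar> \<le> norm c * 1"
    using abs_inner_le_q0[of c q] q0_pos[of q] by (simp add: divide_le_eq)
  also have "\<dots> \<le> norm c * q0 q ^ 2" by (intro mult_left_mono one_le_q0_sq) auto
  finally show ?thesis .
qed

lemma abs_inner_le: "\<bar>c \<bullet> q\<bar> \<le> norm c * q0 q ^ 2"
  using abs_inner_le_q0[of c q] q0_le_q0_sq[of q]
  by (meson mult_left_mono norm_ge_zero order_trans)

lemma abs_component_div_q0_le: "\<bar>q $ i / q0 q\<bar> \<le> 1 * q0 q ^ 2"
proof -
  have "\<bar>q $ i / q0 q\<bar> \<le> 1" using abs_component_le_q0[of q i] q0_pos[of q] by (simp add: divide_le_eq abs_divide)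
  thus ?thesis using one_le_q0_sq[of q] by simp
qed

lemma abs_component_le: "\<bar>q $ i\<bar> \<le> 1 * q0 q ^ 2"
  using abs_component_le_q0[of q i] q0_le_q0_sq[of q] by simp

lemma abs_component_inner_div_q0_le: "\<bar>q $ i * (c \<bullet> q) / q0 q\<bar> \<le> norm c * q0 q ^ 2"
proof -
  have "\<bar>q $ i * (c \<bullet> q) / q0 q\<bar> = \<bar>q $ i\<bar> * \<bar>c \<bullet> q\<bar> / q0 q" using q0_pos[of q] by (simp add: abs_mult)
  also have "\<dots> \<le> q0 q * (norm c * q0 q) / q0 q"
    using q0_pos[of q] by (intro divide_right_mono mult_mono abs_component_le_q0 abs_inner_le_q0) auto
  also have "\<dots> = norm c * q0 q" by simp
  also have "\<dots> \<le> norm c * q0 q ^ 2" by (intro mult_left_mono q0_le_q0_sq) auto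
  finally show ?thesis .
qed

lemma nh_alpha_coll_inv:
  assumes b: "\<beta> > 0"
  shows "nh_alpha \<beta> (coll_inv \<beta> a b c) = a * alpha0 \<beta> + b"
proof -
  have "nh_alpha \<beta> (coll_inv \<beta> a b c) = (LINT q|lborel. a * ((1 / q0 q) * J0 \<beta> q) + b * (1 * J0 \<beta> q) + ((c \<bullet> q) / q0 q) * J0 \<beta> q)"
    unfolding nh_alpha_def coll_inv_def
    by (intro Bochner_Integration.integral_cong refl) (simp add: mult.assoc sqrt_J0_mult_self[OF b] algebra_simps less_imp_le[OF J0_pos[OF b]] add_divide_distrib)
  also have "\<dots> = a * alpha0 \<beta> + b * 1 + 0"
  proof -
    have i1: "integrable lborel (\<lambda>q. (1/q0 q) * J0 \<beta> q)"
      by (rule integrable_mult_J0[OF b _ abs_inv_q0_le]) (intro continuous_intros; simp)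
    have i2: "integrable lborel (\<lambda>q. 1 * J0 \<beta> q)"
      by (rule integrable_mult_J0[OF b _ abs_one_le]) (intro continuous_intros)
    have i3: "integrable lborel (\<lambda>q. ((c \<bullet> q) / q0 q) * J0 \<beta> q)"
      by (rule integrable_mult_J0[OF b _ abs_inner_div_q0_le]) (intro continuous_intros; simp)
    show ?thesis unfolding integral_lincomb3[OF i1 i2 i3] integral_J0_div_q0[OF b] integral_J0[OF b] integral_inner_J0_div_q0 by simp
  qed
  finally show ?thesis by simp
qed

lemma nh_energy_coll_inv:
  assumes b: "\<beta> > 0"
  shows "nh_energy \<beta> (coll_inv \<beta> a b c) = a + b * Psi \<beta>"
proof -
  have "nh_energy \<beta> (coll_inv \<beta> a b c) = (LINT q|lborel. a * (1 * J0 \<beta> q) + b * (q0 q * J0 \<beta> q) + (c \<bullet> q) * J0 \<beta> q)"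
    unfolding nh_energy_def coll_inv_def
    by (intro Bochner_Integration.integral_cong refl) (simp add: mult.assoc sqrt_J0_mult_self[OF b] algebra_simps b)
  also have "\<dots> = a * 1 + b * Psi \<beta> + 0"
  proof -
    have i1: "integrable lborel (\<lambda>q. 1 * J0 \<beta> q)"
      by (rule integrable_mult_J0[OF b _ abs_one_le]) (intro continuous_intros)
    have i2: "integrable lborel (\<lambda>q. q0 q * J0 \<beta> q)"
      by (rule integrable_mult_J0[OF b _ abs_q0_le]) (intro continuous_intros)
    have i3: "integrable lborel (\<lambda>q. (c \<bullet> q) * J0 \<beta> q)"
      by (rule integrable_mult_J0[OF b _ abs_inner_le]) (intro continuous_intros)
    show ?thesis unfolding integral_lincomb3[OF i1 i2 i3] integral_J0[OF b] integral_q0_J0[OF b] integral_inner_J0 by simp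
  qed
  finally show ?thesis by simp
qed

lemma nh_u_coll_inv:
  assumes b: "\<beta> > 0"
  shows "nh_u \<beta> (coll_inv \<beta> a b c) = (1/\<beta>) *\<^sub>R c"
proof (rule vec_eq_iff[THEN iffD2], rule allI)
  fix i
  have "nh_u \<beta> (coll_inv \<beta> a b c) $ i = (LINT q|lborel. a * ((q $ i / q0 q) * J0 \<beta> q) + b * ((q $ i) * J0 \<beta> q) + (q $ i * (c \<bullet> q) / q0 q) * J0 \<beta> q)"
    unfolding nh_u_def coll_inv_def
    by (simp, intro Bochner_Integration.integral_cong refl) (simp add: mult.assoc sqrt_J0_mult_self[OF b] algebra_simps add_divide_distrib b)
  also have "\<dots> = a * 0 + b * 0 + c $ i / \<beta>"
  proof -
    have i1: "integrable lborel (\<lambda>q. (q $ i / q0 q) * J0 \<beta> q)"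
      by (rule integrable_mult_J0[OF b _ abs_component_div_q0_le]) (intro continuous_intros; simp)
    have i2: "integrable lborel (\<lambda>q. (q $ i) * J0 \<beta> q)"
      by (rule integrable_mult_J0[OF b _ abs_component_le]) (intro continuous_intros)
    have i3: "integrable lborel (\<lambda>q. (q $ i * (c \<bullet> q) / q0 q) * J0 \<beta> q)"
      by (rule integrable_mult_J0[OF b _ abs_component_inner_div_q0_le]) (intro continuous_intros; simp)
    show ?thesis unfolding integral_lincomb3[OF i1 i2 i3] integral_component_J0_div_q0 integral_component_J0 integral_component_inner_J0_div_q0[OF b] by simp
  qed
  finally show "nh_u \<beta> (coll_inv \<beta> a b c) $ i = ((1/\<beta>) *\<^sub>R c) $ i" by simp
qed

definition pcoeff_a :: "real \<Rightarrow> (mom \<Rightarrow> real) \<Rightarrow> real" where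
  "pcoeff_a \<beta> f = (Psi \<beta> * nh_alpha \<beta> f - nh_energy \<beta> f) / kappa0 \<beta>"

definition pcoeff_b :: "real \<Rightarrow> (mom \<Rightarrow> real) \<Rightarrow> real" where
  "pcoeff_b \<beta> f = (alpha0 \<beta> * nh_energy \<beta> f - nh_alpha \<beta> f) / kappa0 \<beta>"

definition pcoeff_c :: "real \<Rightarrow> (mom \<Rightarrow> real) \<Rightarrow> mom" where
  "pcoeff_c \<beta> f = \<beta> *\<^sub>R nh_u \<beta> f"

lemma Pop_eq_coll_inv: "Pop \<beta> f = coll_inv \<beta> (pcoeff_a \<beta> f) (pcoeff_b \<beta> f) (pcoeff_c \<beta> f)"
  unfolding Pop_def coll_inv_def pcoeff_a_def pcoeff_b_def pcoeff_c_def
  by (auto simp: fun_eq_iff diff_divide_distrib add_divide_distrib algebra_simps)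

lemma pcoeff_inverse_identities:
  fixes k A P x y :: real
  assumes "k \<noteq> 0" "k = A * P - 1"
  shows "(P * x - y) / k * A + (A * y - x) / k = x"
    and "(P * x - y) / k + (A * y - x) / k * P = y"
proof -
  have "(P * x - y) / k * A + (A * y - x) / k = x * (A * P - 1) / k"
    and "(P * x - y) / k + (A * y - x) / k * P = y * (A * P - 1) / k"
    using assms(1) by (simp_all add: field_simps)
  thus "(P * x - y) / k * A + (A * y - x) / k = x"
    and "(P * x - y) / k + (A * y - x) / k * P = y"
    using assms by simp_all
qed

lemma moments_Pop:
  assumes b: "\<beta> > 0"
  shows "nh_alpha \<beta> (Pop \<beta> f) = nh_alpha \<beta> f"
    and "nh_energy \<beta> (Pop \<beta> f) = nh_energy \<beta> f"
    and "nh_u \<beta> (Pop \<beta> f) = nh_u \<beta> f"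
proof -
  have k: "kappa0 \<beta> = alpha0 \<beta> * Psi \<beta> - 1" by (rule kappa0_eq)
  have kn: "kappa0 \<beta> \<noteq> 0" by (rule kappa0_nonzero[OF b])
  show "nh_alpha \<beta> (Pop \<beta> f) = nh_alpha \<beta> f"
    unfolding Pop_eq_coll_inv nh_alpha_coll_inv[OF b] pcoeff_a_def pcoeff_b_def by (rule pcoeff_inverse_identities(1)[OF kn k])
  show "nh_energy \<beta> (Pop \<beta> f) = nh_energy \<beta> f"
    unfolding Pop_eq_coll_inv nh_energy_coll_inv[OF b] pcoeff_a_def pcoeff_b_def by (rule pcoeff_inverse_identities(2)[OF kn k])
  show "nh_u \<beta> (Pop \<beta> f) = nh_u \<beta> f"
    unfolding Pop_eq_coll_inv nh_u_coll_inv[OF b] pcoeff_c_def using b by simp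
qed

lemma Pop_coll_inv:
  assumes b: "\<beta> > 0"
  shows "Pop \<beta> (coll_inv \<beta> a b c) = coll_inv \<beta> a b c"
proof -
  have k: "kappa0 \<beta> = alpha0 \<beta> * Psi \<beta> - 1" by (rule kappa0_eq)
  have kn: "kappa0 \<beta> \<noteq> 0" by (rule kappa0_nonzero[OF b])
  have "pcoeff_a \<beta> (coll_inv \<beta> a b c) = a"
    unfolding pcoeff_a_def nh_alpha_coll_inv[OF b] nh_energy_coll_inv[OF b] using kn unfolding k by (simp add: field_simps)
  moreover have "pcoeff_b \<beta> (coll_inv \<beta> a b c) = b"
    unfolding pcoeff_b_def nh_alpha_coll_inv[OF b] nh_energy_coll_inv[OF b] using kn unfolding k by (simp add: field_simps)
  moreover have "pcoeff_c \<beta> (coll_inv \<beta> a b c) = c"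
    unfolding pcoeff_c_def nh_u_coll_inv[OF b] using b by simp
  ultimately show ?thesis unfolding Pop_eq_coll_inv by simp
qed

lemma coll_inv_measurable: "coll_inv \<beta> a b c \<in> borel_measurable lborel"
  unfolding coll_inv_def by (simp, intro borel_measurable_continuous_onI continuous_intros)

lemma coll_inv_sq_le:
  assumes b: "\<beta> > 0"
  shows "(coll_inv \<beta> a b c q)^2 \<le> (\<bar>a\<bar> + \<bar>b\<bar> + norm c)^2 * (q0 q ^ 2 * J0 \<beta> q)"
proof -
  have "\<bar>a + b * q0 q + c \<bullet> q\<bar> \<le> \<bar>a\<bar> + \<bar>b\<bar> * q0 q + norm c * q0 q"
    using abs_inner_le_q0[of c q] by (simp add: abs_mult abs_triangle_ineq order_trans[OF abs_triangle_ineq] add_mono)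
  also have "\<dots> \<le> (\<bar>a\<bar> + \<bar>b\<bar> + norm c) * q0 q"
  proof -
    have "\<bar>a\<bar> \<le> \<bar>a\<bar> * q0 q" using q0_ge1[of q] by (simp add: mult_le_cancel_left1)
    thus ?thesis by (simp add: algebra_simps)
  qed
  finally have h: "\<bar>a + b * q0 q + c \<bullet> q\<bar> \<le> (\<bar>a\<bar> + \<bar>b\<bar> + norm c) * q0 q" .
  have "(coll_inv \<beta> a b c q)^2 = (a + b * q0 q + c \<bullet> q)^2 * J0 \<beta> q"
    unfolding coll_inv_def using J0_pos[OF b, of q] by (simp add: power_mult_distrib)
  also have "\<dots> \<le> ((\<bar>a\<bar> + \<bar>b\<bar> + norm c) * q0 q)^2 * J0 \<beta> q"
  proof (rule mult_right_mono)
    show "(a + b * q0 q + c \<bullet> q)^2 \<le> ((\<bar>a\<bar> + \<bar>b\<bar> + norm c) * q0 q)^2"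
      using power_mono[OF h abs_ge_zero, of 2] by simp
  qed (use J0_pos[OF b, of q] in simp)
  finally show ?thesis by (simp add: power_mult_distrib)
qed

lemma coll_inv_L2:
  assumes b: "\<beta> > 0"
  shows "coll_inv \<beta> a b c \<in> L2"
  unfolding L2_def
proof (intro CollectI conjI coll_inv_measurable)
  show "integrable lborel (\<lambda>q. (coll_inv \<beta> a b c q)\<^sup>2)"
  proof (rule Bochner_Integration.integrable_bound)
    show "integrable lborel (\<lambda>q. (\<bar>a\<bar> + \<bar>b\<bar> + norm c)^2 * (q0 q ^ 2 * J0 \<beta> q))"
      by (intro integrable_mult_right integrable_mult_J0[OF b, where C=1]) (auto intro!: continuous_intros)
    show "(\<lambda>q. (coll_inv \<beta> a b c q)\<^sup>2) \<in> borel_measurable lborel" using coll_inv_measurable by measurable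
    show "AE x in lborel. norm ((coll_inv \<beta> a b c x)\<^sup>2) \<le> norm ((\<bar>a\<bar> + \<bar>b\<bar> + norm c)^2 * (q0 x ^ 2 * J0 \<beta> x))"
      using coll_inv_sq_le[OF b] by (auto intro!: AE_I2 simp: abs_mult b)
  qed
qed

lemma Pop_L2: "\<beta> > 0 \<Longrightarrow> Pop \<beta> f \<in> L2"
  unfolding Pop_eq_coll_inv by (rule coll_inv_L2)

lemma L2_measurable: "f \<in> L2 \<Longrightarrow> f \<in> borel_measurable lborel" by (simp add: L2_def)

lemma L2_integrable_sq: "f \<in> L2 \<Longrightarrow> integrable lborel (\<lambda>q. (f q)^2)" by (simp add: L2_def)

lemma abs_mult_le_half: "\<bar>x * y\<bar> \<le> (x^2 + y^2) / (2::real)"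
proof -
  have "0 \<le> (\<bar>x\<bar> - \<bar>y\<bar>)^2" by simp
  thus ?thesis by (simp add: abs_mult power2_eq_square algebra_simps)
qed

lemma integrable_L2_mult_bounded:
  assumes f: "f \<in> L2" and g: "g \<in> L2" and h: "h \<in> borel_measurable lborel" and hb: "\<And>q. \<bar>h q\<bar> \<le> 1"
  shows "integrable lborel (\<lambda>q. f q * g q * h q)"
proof (rule Bochner_Integration.integrable_bound)
  show "integrable lborel (\<lambda>q. ((f q)^2 + (g q)^2) / 2)"
    using L2_integrable_sq[OF f] L2_integrable_sq[OF g] by simp
  show "(\<lambda>q. f q * g q * h q) \<in> borel_measurable lborel"
    using L2_measurable[OF f] L2_measurable[OF g] h by measurable
  show "AE x in lborel. norm (f x * g x * h x) \<le> norm (((f x)^2 + (g x)^2) / 2)"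
  proof (rule AE_I2)
    fix x
    have "\<bar>f x * g x * h x\<bar> = \<bar>f x * g x\<bar> * \<bar>h x\<bar>" by (simp add: abs_mult)
    also have "\<dots> \<le> \<bar>f x * g x\<bar> * 1" by (intro mult_left_mono hb) auto
    also have "\<dots> \<le> ((f x)^2 + (g x)^2) / 2" using abs_mult_le_half[of "f x" "g x"] by simp
    finally show "norm (f x * g x * h x) \<le> norm (((f x)^2 + (g x)^2) / 2)" by simp
  qed
qed

lemma sqrt_J0_L2: "\<beta> > 0 \<Longrightarrow> (\<lambda>q. sqrt (J0 \<beta> q)) \<in> L2"
proof -
  assume b: "\<beta> > 0"
  have "coll_inv \<beta> 1 0 0 = (\<lambda>q. sqrt (J0 \<beta> q))" by (simp add: coll_inv_def fun_eq_iff)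
  thus ?thesis using coll_inv_L2[OF b, of 1 0 0] by simp
qed

lemma borel_measurable_inv_q0: "(\<lambda>q. 1 / q0 q) \<in> borel_measurable lborel"
  by (simp, intro borel_measurable_continuous_onI continuous_intros) simp

lemma borel_measurable_component_div_q0: "(\<lambda>q. q $ i / q0 q) \<in> borel_measurable lborel"
  by (simp, intro borel_measurable_continuous_onI continuous_intros) simp

lemma abs_inv_q0_le_1: "\<bar>1 / q0 q\<bar> \<le> 1" using q0_ge1[of q] by simp

lemma abs_component_div_q0_le_1: "\<bar>q $ i / q0 q\<bar> \<le> 1" using abs_component_le_q0[of q i] q0_pos[of q] by (simp add: divide_le_eq abs_divide)

lemma integrable_nh_alpha: "\<beta> > 0 \<Longrightarrow> g \<in> L2 \<Longrightarrow> integrable lborel (\<lambda>q. g q * sqrt (J0 \<beta> q) * (1 / q0 q))"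
  by (rule integrable_L2_mult_bounded[OF _ sqrt_J0_L2 borel_measurable_inv_q0 abs_inv_q0_le_1])

lemma integrable_nh_energy: "\<beta> > 0 \<Longrightarrow> g \<in> L2 \<Longrightarrow> integrable lborel (\<lambda>q. g q * sqrt (J0 \<beta> q) * 1)"
  by (rule integrable_L2_mult_bounded[OF _ sqrt_J0_L2]) auto

lemma integrable_nh_u: "\<beta> > 0 \<Longrightarrow> g \<in> L2 \<Longrightarrow> integrable lborel (\<lambda>q. g q * sqrt (J0 \<beta> q) * (q $ i / q0 q))"
  by (rule integrable_L2_mult_bounded[OF _ sqrt_J0_L2 borel_measurable_component_div_q0 abs_component_div_q0_le_1])

lemma nh_alpha_alt: "nh_alpha \<beta> g = (LINT q|lborel. g q * sqrt (J0 \<beta> q) * (1 / q0 q))"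
  unfolding nh_alpha_def by simp

lemma nh_energy_alt: "nh_energy \<beta> g = (LINT q|lborel. g q * sqrt (J0 \<beta> q) * 1)"
  unfolding nh_energy_def by simp

lemma nh_u_alt: "nh_u \<beta> g $ i = (LINT q|lborel. g q * sqrt (J0 \<beta> q) * (q $ i / q0 q))"
  unfolding nh_u_def by (simp add: mult_ac)

lemma integral_coll_inv_mult_div_q0:
  assumes b: "\<beta> > 0" and g: "g \<in> L2"
  shows "integrable lborel (\<lambda>q. coll_inv \<beta> a b c q * g q / q0 q)"
    and "(LINT q|lborel. coll_inv \<beta> a b c q * g q / q0 q) = a * nh_alpha \<beta> g + b * nh_energy \<beta> g + c \<bullet> nh_u \<beta> g"
proof -
  define F where "F = (\<lambda>i q. c $ i * (g q * sqrt (J0 \<beta> q) * (q $ i / q0 q)))"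
  have eq: "(\<lambda>q. coll_inv \<beta> a b c q * g q / q0 q) = (\<lambda>q. a * (g q * sqrt (J0 \<beta> q) * (1 / q0 q)) + b * (g q * sqrt (J0 \<beta> q) * 1) + (\<Sum>i\<in>UNIV. F i q))"
    by (auto simp: fun_eq_iff coll_inv_def F_def inner_vec_def field_simps sum_distrib_left sum_distrib_right sum_divide_distrib)
  have iF: "integrable lborel (F i)" for i unfolding F_def by (intro integrable_mult_right integrable_nh_u[OF b g])
  have iS: "integrable lborel (\<lambda>q. \<Sum>i\<in>UNIV. F i q)" by (intro Bochner_Integration.integrable_sum iF)
  show "integrable lborel (\<lambda>q. coll_inv \<beta> a b c q * g q / q0 q)"
    unfolding eq by (intro Bochner_Integration.integrable_add integrable_mult_right integrable_nh_alpha[OF b g] integrable_nh_energy[OF b g] iS)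
  have "(LINT q|lborel. (\<Sum>i\<in>UNIV. F i q)) = (\<Sum>i\<in>UNIV. (LINT q|lborel. F i q))"
    by (rule Bochner_Integration.integral_sum) (rule iF)
  also have "\<dots> = c \<bullet> nh_u \<beta> g" unfolding F_def inner_vec_def nh_u_alt
    by (intro sum.cong refl) (simp only: inner_real_def integral_mult_right_zero)
  finally have S: "(LINT q|lborel. (\<Sum>i\<in>UNIV. F i q)) = c \<bullet> nh_u \<beta> g" .
  show "(LINT q|lborel. coll_inv \<beta> a b c q * g q / q0 q) = a * nh_alpha \<beta> g + b * nh_energy \<beta> g + c \<bullet> nh_u \<beta> g"
    unfolding eq integral_lincomb3[OF integrable_nh_alpha[OF b g] integrable_nh_energy[OF b g] iS] S nh_alpha_alt nh_energy_alt ..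
qed

lemma L2_div_q0:
  assumes h: "h \<in> L2"
  shows "(\<lambda>q. h q / q0 q) \<in> L2"
  unfolding L2_def
proof (intro CollectI conjI)
  show "(\<lambda>q. h q / q0 q) \<in> borel_measurable lborel"
    using L2_measurable[OF h] by (intro borel_measurable_divide) (simp_all, intro borel_measurable_continuous_onI continuous_intros)
  show "integrable lborel (\<lambda>q. (h q / q0 q)\<^sup>2)"
  proof (rule Bochner_Integration.integrable_bound[OF L2_integrable_sq[OF h]])
    show "(\<lambda>q. (h q / q0 q)\<^sup>2) \<in> borel_measurable lborel"
      using L2_measurable[OF h] by (intro borel_measurable_power borel_measurable_divide) (simp_all, intro borel_measurable_continuous_onI continuous_intros)
    show "AE x in lborel. norm ((h x / q0 x)\<^sup>2) \<le> norm ((h x)\<^sup>2)"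
    proof (rule AE_I2)
      fix x
      have "(h x / q0 x)^2 = (h x)^2 / (q0 x)^2" by (simp add: power_divide)
      also have "\<dots> \<le> (h x)^2" using one_le_q0_sq[of x] by (simp add: divide_le_eq mult_le_cancel_left1)
      finally show "norm ((h x / q0 x)\<^sup>2) \<le> norm ((h x)\<^sup>2)" by simp
    qed
  qed
qed

section \<open>Self-adjointness, kernel and sign of L\<close>

definition Pform :: "real \<Rightarrow> (mom \<Rightarrow> real) \<Rightarrow> (mom \<Rightarrow> real) \<Rightarrow> real" where
  "Pform \<beta> f g = pcoeff_a \<beta> f * nh_alpha \<beta> g + pcoeff_b \<beta> f * nh_energy \<beta> g + pcoeff_c \<beta> f \<bullet> nh_u \<beta> g"

lemma Pform_sym: "\<beta> > 0 \<Longrightarrow> Pform \<beta> f g = Pform \<beta> g f"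
  unfolding Pform_def pcoeff_a_def pcoeff_b_def pcoeff_c_def using kappa0_nonzero[of \<beta>]
  by (simp add: field_simps inner_commute)

lemma integral_Pop_mult_div_q0:
  assumes b: "\<beta> > 0" and g: "g \<in> L2"
  shows "integrable lborel (\<lambda>q. Pop \<beta> f q * g q / q0 q)"
    and "(LINT q|lborel. Pop \<beta> f q * g q / q0 q) = Pform \<beta> f g"
  unfolding Pop_eq_coll_inv Pform_def by (rule integral_coll_inv_mult_div_q0[OF b g])+

lemma integrable_L2_mult_div_q0:
  assumes "f \<in> L2" "g \<in> L2"
  shows "integrable lborel (\<lambda>q. f q * g q * (1 / q0 q))"
  by (rule integrable_L2_mult_bounded[OF assms borel_measurable_inv_q0 abs_inv_q0_le_1])

lemma inner_L2_Lop:
  assumes b: "\<beta> > 0" and f: "f \<in> L2" and g: "g \<in> L2"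
  shows "inner_L2 (Lop \<beta> f) g = Pform \<beta> f g - (LINT q|lborel. f q * g q * (1 / q0 q))"
proof -
  have "inner_L2 (Lop \<beta> f) g = (LINT q|lborel. Pop \<beta> f q * g q / q0 q - f q * g q * (1 / q0 q))"
    unfolding inner_L2_def Lop_def by (intro Bochner_Integration.integral_cong refl) (simp add: field_simps)
  also have "\<dots> = (LINT q|lborel. Pop \<beta> f q * g q / q0 q) - (LINT q|lborel. f q * g q * (1 / q0 q))"
    by (rule Bochner_Integration.integral_diff[OF integral_Pop_mult_div_q0(1)[OF b g] integrable_L2_mult_div_q0[OF f g]])
  finally show ?thesis unfolding integral_Pop_mult_div_q0(2)[OF b g] .
qed

lemma Lop_self_adjoint:
  assumes b: "\<beta> > 0" and f: "f \<in> L2" and g: "g \<in> L2"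
  shows "inner_L2 (Lop \<beta> f) g = inner_L2 f (Lop \<beta> g)"
proof -
  have "inner_L2 f (Lop \<beta> g) = inner_L2 (Lop \<beta> g) f" unfolding inner_L2_def by (simp add: mult.commute)
  also have "\<dots> = Pform \<beta> g f - (LINT q|lborel. g q * f q * (1 / q0 q))" by (rule inner_L2_Lop[OF b g f])
  also have "\<dots> = Pform \<beta> f g - (LINT q|lborel. f q * g q * (1 / q0 q))"
    using Pform_sym[OF b, of g f] by (simp add: mult.commute)
  finally show ?thesis using inner_L2_Lop[OF b f g] by simp
qed

lemma inner_L2_Lop_self:
  assumes b: "\<beta> > 0" and f: "f \<in> L2"
  shows "inner_L2 (Lop \<beta> f) f = - inner_q0 (\<lambda>q. f q - Pop \<beta> f q) (\<lambda>q. f q - Pop \<beta> f q)"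
    and "inner_L2 (Lop \<beta> f) f \<le> 0"
proof -
  have PL: "Pop \<beta> f \<in> L2" by (rule Pop_L2[OF b])
  have XBP: "Pform \<beta> f (Pop \<beta> f) = Pform \<beta> f f" unfolding Pform_def using moments_Pop[OF b, of f] by simp
  have "inner_q0 (\<lambda>q. f q - Pop \<beta> f q) (\<lambda>q. f q - Pop \<beta> f q)
      = (LINT q|lborel. 1 * (f q * f q * (1 / q0 q)) + (-2) * (Pop \<beta> f q * f q / q0 q) + Pop \<beta> f q * Pop \<beta> f q / q0 q)"
    unfolding inner_q0_def by (intro Bochner_Integration.integral_cong refl) (simp add: field_simps)
  also have "\<dots> = 1 * (LINT q|lborel. f q * f q * (1 / q0 q)) + (-2) * Pform \<beta> f f + Pform \<beta> f (Pop \<beta> f)"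
    unfolding integral_lincomb3[OF integrable_L2_mult_div_q0[OF f f] integral_Pop_mult_div_q0(1)[OF b f] integral_Pop_mult_div_q0(1)[OF b PL]] integral_Pop_mult_div_q0(2)[OF b f] integral_Pop_mult_div_q0(2)[OF b PL] ..
  finally have iq: "inner_q0 (\<lambda>q. f q - Pop \<beta> f q) (\<lambda>q. f q - Pop \<beta> f q) = (LINT q|lborel. f q * f q * (1 / q0 q)) - Pform \<beta> f f"
    unfolding XBP by simp
  show eq: "inner_L2 (Lop \<beta> f) f = - inner_q0 (\<lambda>q. f q - Pop \<beta> f q) (\<lambda>q. f q - Pop \<beta> f q)"
    unfolding iq inner_L2_Lop[OF b f f] by simp
  have "inner_q0 (\<lambda>q. f q - Pop \<beta> f q) (\<lambda>q. f q - Pop \<beta> f q) \<ge> 0"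
    unfolding inner_q0_def by (intro integral_nonneg_AE AE_I2) (simp add: q0_pos less_imp_le)
  thus "inner_L2 (Lop \<beta> f) f \<le> 0" unfolding eq by simp
qed

lemma moments_cong_AE:
  assumes f: "f \<in> borel_measurable lborel" and g: "g \<in> borel_measurable lborel"
    and ae: "AE q in lborel. f q = g q"
  shows "nh_alpha \<beta> f = nh_alpha \<beta> g" "nh_energy \<beta> f = nh_energy \<beta> g" "nh_u \<beta> f = nh_u \<beta> g"
proof -
  have mJ: "(\<lambda>q. sqrt (J0 \<beta> q)) \<in> borel_measurable lborel"
    by (simp, intro borel_measurable_continuous_onI continuous_intros)
  have mq: "(\<lambda>q. q0 q) \<in> borel_measurable lborel"
    by (simp, intro borel_measurable_continuous_onI continuous_intros)
  show "nh_alpha \<beta> f = nh_alpha \<beta> g" unfolding nh_alpha_def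
    by (rule integral_cong_AE) (use f g mJ mq ae in \<open>auto elim!: AE_mp\<close>)
  show "nh_energy \<beta> f = nh_energy \<beta> g" unfolding nh_energy_def
    by (rule integral_cong_AE) (use f g mJ mq ae in \<open>auto elim!: AE_mp\<close>)
  show "nh_u \<beta> f = nh_u \<beta> g" unfolding nh_u_def
  proof (rule vec_eq_iff[THEN iffD2], intro allI)
    fix i
    have mi: "(\<lambda>q::mom. q $ i) \<in> borel_measurable lborel" by simp
    show "(\<chi> i. LINT q|lborel. q $ i * f q * sqrt (J0 \<beta> q) / q0 q) $ i = (\<chi> i. LINT q|lborel. q $ i * g q * sqrt (J0 \<beta> q) / q0 q) $ i"
      by simp (rule integral_cong_AE, use f g mJ mq mi ae in \<open>auto elim!: AE_mp\<close>)
  qed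
qed

lemma Pop_cong:
  assumes "nh_alpha \<beta> f = nh_alpha \<beta> g" "nh_energy \<beta> f = nh_energy \<beta> g" "nh_u \<beta> f = nh_u \<beta> g"
  shows "Pop \<beta> f = Pop \<beta> g"
  unfolding Pop_def[abs_def] using assms by simp

lemma Lop_kernel_iff:
  assumes b: "\<beta> > 0" and f: "f \<in> L2"
  shows "(AE q in lborel. Lop \<beta> f q = 0) \<longleftrightarrow>
         (\<exists>a b (c::mom). AE q in lborel. f q = (a + b * q0 q + c \<bullet> q) * sqrt (J0 \<beta> q))"
proof
  assume "AE q in lborel. Lop \<beta> f q = 0"
  hence "AE q in lborel. f q = coll_inv \<beta> (pcoeff_a \<beta> f) (pcoeff_b \<beta> f) (pcoeff_c \<beta> f) q"
    by (rule AE_mp) (auto simp: Lop_def Pop_eq_coll_inv[symmetric])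
  thus "\<exists>a b (c::mom). AE q in lborel. f q = (a + b * q0 q + c \<bullet> q) * sqrt (J0 \<beta> q)"
    unfolding coll_inv_def by blast
next
  assume "\<exists>a b (c::mom). AE q in lborel. f q = (a + b * q0 q + c \<bullet> q) * sqrt (J0 \<beta> q)"
  then obtain a bb c where ae: "AE q in lborel. f q = coll_inv \<beta> a bb c q" unfolding coll_inv_def by blast
  note mc = moments_cong_AE[OF L2_measurable[OF f] coll_inv_measurable ae]
  have P: "Pop \<beta> f = coll_inv \<beta> a bb c"
    using Pop_cong[OF mc] Pop_coll_inv[OF b] by simp
  show "AE q in lborel. Lop \<beta> f q = 0"
    using ae by (rule AE_mp) (auto simp: Lop_def P)
qed

section \<open>Compactness of K\<close>

lemma Lop_eq_Kop_minus_div_q0: "Lop \<beta> f = (\<lambda>q. - f q / q0 q + Kop \<beta> f q)"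
  by (auto simp: fun_eq_iff Lop_def Kop_def diff_divide_distrib)

lemma Kop_eq_coll_inv: "Kop \<beta> f = (\<lambda>q. coll_inv \<beta> (pcoeff_a \<beta> f) (pcoeff_b \<beta> f) (pcoeff_c \<beta> f) q / q0 q)"
  unfolding Kop_def[abs_def] Pop_eq_coll_inv ..

lemma Kop_L2: "\<beta> > 0 \<Longrightarrow> Kop \<beta> f \<in> L2"
  unfolding Kop_eq_coll_inv by (rule L2_div_q0[OF coll_inv_L2])

lemma integral_coll_inv_div_q0_sq_le:
  assumes b: "\<beta> > 0"
  shows "(LINT q|lborel. (coll_inv \<beta> a bb c q / q0 q)^2) \<le> (\<bar>a\<bar> + \<bar>bb\<bar> + norm c)^2"
proof -
  have "(LINT q|lborel. (coll_inv \<beta> a bb c q / q0 q)^2) \<le> (LINT q|lborel. (\<bar>a\<bar> + \<bar>bb\<bar> + norm c)^2 * (1 * J0 \<beta> q))"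
  proof (rule integral_mono)
    show "integrable lborel (\<lambda>q. (coll_inv \<beta> a bb c q / q0 q)^2)"
      using L2_div_q0[OF coll_inv_L2[OF b]] by (simp add: L2_def)
    show "integrable lborel (\<lambda>q. (\<bar>a\<bar> + \<bar>bb\<bar> + norm c)^2 * (1 * J0 \<beta> q))"
      by (intro integrable_mult_right integrable_mult_J0[OF b _ abs_one_le]) (intro continuous_intros)
    fix q
    have "(coll_inv \<beta> a bb c q / q0 q)^2 = (coll_inv \<beta> a bb c q)^2 / q0 q ^ 2" by (simp add: power_divide)
    also have "\<dots> \<le> (\<bar>a\<bar> + \<bar>bb\<bar> + norm c)^2 * (q0 q ^ 2 * J0 \<beta> q) / q0 q ^ 2"
      by (intro divide_right_mono coll_inv_sq_le[OF b]) simp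
    also have "\<dots> = (\<bar>a\<bar> + \<bar>bb\<bar> + norm c)^2 * (1 * J0 \<beta> q)" by simp
    finally show "(coll_inv \<beta> a bb c q / q0 q)^2 \<le> (\<bar>a\<bar> + \<bar>bb\<bar> + norm c)^2 * (1 * J0 \<beta> q)" .
  qed
  also have "\<dots> = (\<bar>a\<bar> + \<bar>bb\<bar> + norm c)^2" using integral_J0[OF b] by simp
  finally show ?thesis .
qed

lemma coll_inv_diff: "coll_inv \<beta> a bb c q - coll_inv \<beta> a' bb' c' q = coll_inv \<beta> (a - a') (bb - bb') (c - c') q"
  unfolding coll_inv_def by (simp add: algebra_simps inner_diff_left)

lemma abs_moment_le:
  assumes b: "\<beta> > 0" and f: "f \<in> L2" and C: "(LINT q|lborel. (f q)^2) \<le> C"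
    and h: "h \<in> borel_measurable lborel" and hb: "\<And>q. \<bar>h q\<bar> \<le> 1"
  shows "\<bar>LINT q|lborel. f q * sqrt (J0 \<beta> q) * h q\<bar> \<le> (C + 1) / 2"
proof -
  have sJ: "(\<lambda>q. sqrt (J0 \<beta> q)) \<in> L2" by (rule sqrt_J0_L2[OF b])
  have "\<bar>LINT q|lborel. f q * sqrt (J0 \<beta> q) * h q\<bar> \<le> (LINT q|lborel. ((f q)^2 + (sqrt (J0 \<beta> q))^2) / 2)"
  proof (rule integral_abs_bound_integral)
    show "integrable lborel (\<lambda>q. f q * sqrt (J0 \<beta> q) * h q)" by (rule integrable_L2_mult_bounded[OF f sJ h hb])
    show "integrable lborel (\<lambda>q. ((f q)^2 + (sqrt (J0 \<beta> q))^2) / 2)"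
      using L2_integrable_sq[OF f] L2_integrable_sq[OF sJ] by simp
    fix q
    have "\<bar>f q * sqrt (J0 \<beta> q) * h q\<bar> \<le> \<bar>f q * sqrt (J0 \<beta> q)\<bar> * 1"
      unfolding abs_mult[of "f q * sqrt (J0 \<beta> q)"] by (intro mult_left_mono hb) auto
    also have "\<dots> \<le> ((f q)^2 + (sqrt (J0 \<beta> q))^2) / 2" using abs_mult_le_half by simp
    finally show "\<bar>f q * sqrt (J0 \<beta> q) * h q\<bar> \<le> ((f q)^2 + (sqrt (J0 \<beta> q))^2) / 2" .
  qed
  also have "\<dots> = ((LINT q|lborel. (f q)^2) + (LINT q|lborel. 1 * J0 \<beta> q)) / 2"
    using L2_integrable_sq[OF f] L2_integrable_sq[OF sJ] J0_pos[OF b] by (simp add: less_imp_le)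
  also have "\<dots> \<le> (C + 1) / 2" using C integral_J0[OF b] by simp
  finally show ?thesis .
qed

definition moments :: "real \<Rightarrow> (mom \<Rightarrow> real) \<Rightarrow> real \<times> real \<times> mom" where
  "moments \<beta> f = (nh_alpha \<beta> f, nh_energy \<beta> f, nh_u \<beta> f)"

lemma bounded_moments:
  assumes b: "\<beta> > 0" and H: "\<And>n. fs n \<in> L2 \<and> (LINT q|lborel. (fs n q)\<^sup>2) \<le> C"
  shows "bounded (range (\<lambda>n. moments \<beta> (fs n)))"
proof -
  define B where "B = (C + 1) / 2"
  have bA: "\<bar>nh_alpha \<beta> (fs n)\<bar> \<le> B" for n
    unfolding nh_alpha_alt B_def using H by (intro abs_moment_le[OF b] borel_measurable_inv_q0 abs_inv_q0_le_1) auto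
  have bE: "\<bar>nh_energy \<beta> (fs n)\<bar> \<le> B" for n
    unfolding nh_energy_alt B_def using H by (intro abs_moment_le[OF b]) auto
  have bU: "\<bar>nh_u \<beta> (fs n) $ i\<bar> \<le> B" for n i
    unfolding nh_u_alt B_def using H by (intro abs_moment_le[OF b] borel_measurable_component_div_q0 abs_component_div_q0_le_1) auto
  have "norm (moments \<beta> (fs n)) \<le> 5 * B" for n
  proof -
    have "norm (nh_u \<beta> (fs n)) \<le> (\<Sum>i\<in>UNIV. \<bar>nh_u \<beta> (fs n) $ i\<bar>)" by (rule norm_le_l1_cart)
    also have "\<dots> \<le> 3 * B" unfolding sum_3 using bU[of n 1] bU[of n 2] bU[of n 3] by simp
    finally have u: "norm (nh_u \<beta> (fs n)) \<le> 3 * B" .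
    have "norm (moments \<beta> (fs n)) \<le> norm (nh_alpha \<beta> (fs n)) + norm (nh_energy \<beta> (fs n), nh_u \<beta> (fs n))"
      unfolding moments_def by (rule norm_Pair_le)
    also have "\<dots> \<le> norm (nh_alpha \<beta> (fs n)) + (norm (nh_energy \<beta> (fs n)) + norm (nh_u \<beta> (fs n)))"
      by (intro add_left_mono norm_Pair_le)
    also have "\<dots> \<le> B + (B + 3 * B)" using bA[of n] bE[of n] u by (intro add_mono) auto
    finally show ?thesis by simp
  qed
  thus ?thesis unfolding bounded_iff by blast
qed

lemma tendsto_Kop_L2_if_moments_converge:
  assumes b: "\<beta> > 0" and lim: "(\<lambda>n. moments \<beta> (fs n)) \<longlonglongrightarrow> (la, le, lu)"
  defines "g \<equiv> (\<lambda>q. coll_inv \<beta> ((Psi \<beta> * la - le) / kappa0 \<beta>) ((alpha0 \<beta> * le - la) / kappa0 \<beta>) (\<beta> *\<^sub>R lu) q / q0 q)"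
  shows "(\<lambda>n. LINT q|lborel. (Kop \<beta> (fs n) q - g q)\<^sup>2) \<longlonglongrightarrow> 0"
proof -
  define ca where "ca = (Psi \<beta> * la - le) / kappa0 \<beta>"
  define cb where "cb = (alpha0 \<beta> * le - la) / kappa0 \<beta>"
  define cc where "cc = \<beta> *\<^sub>R lu"
  have LA: "(\<lambda>n. nh_alpha \<beta> (fs n)) \<longlonglongrightarrow> la" and LE: "(\<lambda>n. nh_energy \<beta> (fs n)) \<longlonglongrightarrow> le"
    and LU: "(\<lambda>n. nh_u \<beta> (fs n)) \<longlonglongrightarrow> lu"
    using tendsto_fst[OF lim] tendsto_fst[OF tendsto_snd[OF lim]] tendsto_snd[OF tendsto_snd[OF lim]]
    by (simp_all add: moments_def)
  define D where "D = (\<lambda>n. (\<bar>pcoeff_a \<beta> (fs n) - ca\<bar> + \<bar>pcoeff_b \<beta> (fs n) - cb\<bar> + norm (pcoeff_c \<beta> (fs n) - cc))^2)"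
  have "(\<lambda>n. pcoeff_a \<beta> (fs n)) \<longlonglongrightarrow> ca" "(\<lambda>n. pcoeff_b \<beta> (fs n)) \<longlonglongrightarrow> cb"
    "(\<lambda>n. pcoeff_c \<beta> (fs n)) \<longlonglongrightarrow> cc"
    unfolding pcoeff_a_def ca_def pcoeff_b_def cb_def pcoeff_c_def cc_def
    by (intro tendsto_intros LA LE LU kappa0_nonzero[OF b])+
  hence "D \<longlonglongrightarrow> (\<bar>ca - ca\<bar> + \<bar>cb - cb\<bar> + norm (cc - cc))^2"
    unfolding D_def by (intro tendsto_intros)
  hence D0: "D \<longlonglongrightarrow> 0" by simp
  have "LINT q|lborel. (Kop \<beta> (fs n) q - g q)\<^sup>2 \<le> D n" for n
  proof -
    have "(LINT q|lborel. (Kop \<beta> (fs n) q - g q)\<^sup>2) = (LINT q|lborel. (coll_inv \<beta> (pcoeff_a \<beta> (fs n) - ca) (pcoeff_b \<beta> (fs n) - cb) (pcoeff_c \<beta> (fs n) - cc) q / q0 q)^2)"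
      unfolding Kop_eq_coll_inv g_def ca_def cb_def cc_def
      by (intro Bochner_Integration.integral_cong refl) (simp add: diff_divide_distrib[symmetric] coll_inv_diff)
    also have "\<dots> \<le> D n" unfolding D_def by (rule integral_coll_inv_div_q0_sq_le[OF b])
    finally show ?thesis .
  qed
  moreover have "LINT q|lborel. (Kop \<beta> (fs n) q - g q)\<^sup>2 \<ge> 0" for n
    by (intro integral_nonneg_AE AE_I2) simp
  ultimately show ?thesis by (intro tendsto_sandwich[OF _ _ tendsto_const D0]) simp_all
qed

lemma compact_op_Kop:
  assumes b: "\<beta> > 0"
  shows "compact_op_L2 (Kop \<beta>)"
  unfolding compact_op_L2_def
proof (intro conjI ballI allI impI)
  show "Kop \<beta> f \<in> L2" for f by (rule Kop_L2[OF b])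
  fix fs :: "nat \<Rightarrow> mom \<Rightarrow> real" and C :: real
  assume "\<forall>n. fs n \<in> L2 \<and> (LINT q|lborel. (fs n q)\<^sup>2) \<le> C"
  then obtain l r where r: "strict_mono r" and lim: "((\<lambda>n. moments \<beta> (fs n)) \<circ> r) \<longlonglongrightarrow> l"
    using bounded_imp_convergent_subsequence[OF bounded_moments[OF b]] by blast
  obtain la le lu where l: "l = (la, le, lu)" by (cases l) auto
  have "(\<lambda>n. moments \<beta> (fs (r n))) \<longlonglongrightarrow> (la, le, lu)" using lim l by (simp add: comp_def)
  from tendsto_Kop_L2_if_moments_converge[OF b this] r
    L2_div_q0[OF coll_inv_L2[OF b]]
  show "\<exists>r g. strict_mono r \<and> g \<in> L2 \<and> (\<lambda>n. LINT q|lborel. (Kop \<beta> (fs (r n)) q - g q)\<^sup>2) \<longlonglongrightarrow> 0"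
    by blast
qed

theorem lemma4p5:
  fixes \<beta>0 :: real
  assumes "\<beta>0 > 0"
  shows "(\<forall>f\<in>L2. \<forall>g\<in>L2. inner_L2 (Lop \<beta>0 f) g = inner_L2 f (Lop \<beta>0 g))
    \<and> (\<forall>a b (c::mom). (\<lambda>q. (a + b * q0 q + c \<bullet> q) * sqrt (J0 \<beta>0 q)) \<in> L2)
    \<and> (\<forall>f\<in>L2. (AE q in lborel. Lop \<beta>0 f q = 0) \<longleftrightarrow>
         (\<exists>a b (c::mom). AE q in lborel. f q = (a + b * q0 q + c \<bullet> q) * sqrt (J0 \<beta>0 q)))
    \<and> (\<forall>f\<in>L2. inner_L2 (Lop \<beta>0 f) f
          = - inner_q0 (\<lambda>q. f q - Pop \<beta>0 f q) (\<lambda>q. f q - Pop \<beta>0 f q)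
        \<and> inner_L2 (Lop \<beta>0 f) f \<le> 0)
    \<and> (\<forall>f. Lop \<beta>0 f = (\<lambda>q. - f q / q0 q + Kop \<beta>0 f q))
    \<and> compact_op_L2 (Kop \<beta>0)"
proof (intro conjI ballI allI)
  note b = assms
  show "inner_L2 (Lop \<beta>0 f) g = inner_L2 f (Lop \<beta>0 g)" if "f \<in> L2" "g \<in> L2" for f g
    by (rule Lop_self_adjoint[OF b that])
  show "(\<lambda>q. (a + bb * q0 q + c \<bullet> q) * sqrt (J0 \<beta>0 q)) \<in> L2" for a bb and c :: mom
    using coll_inv_L2[OF b, of a bb c] unfolding coll_inv_def .
  show "(AE q in lborel. Lop \<beta>0 f q = 0) \<longleftrightarrow>
         (\<exists>a b (c::mom). AE q in lborel. f q = (a + b * q0 q + c \<bullet> q) * sqrt (J0 \<beta>0 q))" if "f \<in> L2" for f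
    by (rule Lop_kernel_iff[OF b that])
  show "inner_L2 (Lop \<beta>0 f) f = - inner_q0 (\<lambda>q. f q - Pop \<beta>0 f q) (\<lambda>q. f q - Pop \<beta>0 f q)" if "f \<in> L2" for f
    by (rule inner_L2_Lop_self(1)[OF b that])
  show "inner_L2 (Lop \<beta>0 f) f \<le> 0" if "f \<in> L2" for f
    by (rule inner_L2_Lop_self(2)[OF b that])
  show "Lop \<beta>0 f = (\<lambda>q. - f q / q0 q + Kop \<beta>0 f q)" for f
    by (rule Lop_eq_Kop_minus_div_q0)
  show "compact_op_L2 (Kop \<beta>0)" by (rule compact_op_Kop[OF b])
qed

end
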